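(* Let $D$ be a bounded domain in $\mathbb{C}^2$ with piecewise smooth Levi-flat boundary and let $S$ be one of its defining hypersurfaces. Let $\hat D$ be a subdomain of $D$ and $g:\hat D\to\mathbb{C}^2$ a holomorphic map with $g(\hat D)\subseteq bD$. If $g(\hat D)\cap S\neq\emptyset$, then $g(\hat D)\subseteq S$.
   Context: A bounded domain $D\subset\mathbb{C}^n$ has piecewise smooth boundary if there are a neighborhood $U$ of $\overline{D}$ and real $\rho_1,\dots,\rho_m\in C^\infty(U)$ with $D=\{q\in U:\rho_k(q)<0,\ 1\le k\le m\}$ and $d\rho_{k_1}\wedge\cdots\wedge d\rho_{k_l}\neq0$ on $S_{k_1}\cap\cdots\cap S_{k_l}$ for distinct indices, where $S_j=\{\rho_j=0\}$; the $S_j$ are the defining hypersurfaces. It is piecewise smooth Levi-flat if each $S_j$ is Levi-flat (its Levi form vanishes on complex tangent vectors). *)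

theory Defs
  imports "HOL-Analysis.Analysis"
begin

fun Ck_on :: "nat \<Rightarrow> 'a::real_normed_vector set \<Rightarrow> ('a \<Rightarrow> 'b::real_normed_vector) \<Rightarrow> bool" where
  "Ck_on 0 U f = continuous_on U f"
| "Ck_on (Suc k) U f =
     (\<exists>f'. (\<forall>x\<in>U. (f has_derivative f' x) (at x)) \<and> (\<forall>v. Ck_on k U (\<lambda>x. f' x v)))"

definition smooth_on :: "'a::real_normed_vector set \<Rightarrow> ('a \<Rightarrow> 'b::real_normed_vector) \<Rightarrow> bool" where
  "smooth_on U f \<longleftrightarrow> (\<forall>k. Ck_on k U f)"

definition wirt_z :: "2 \<Rightarrow> (complex^2 \<Rightarrow> complex) \<Rightarrow> complex^2 \<Rightarrow> complex" where
  "wirt_z j f x = (frechet_derivative f (at x) (axis j 1)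
                   - \<i> * frechet_derivative f (at x) (axis j \<i>)) / 2"

definition wirt_zbar :: "2 \<Rightarrow> (complex^2 \<Rightarrow> complex) \<Rightarrow> complex^2 \<Rightarrow> complex" where
  "wirt_zbar j f x = (frechet_derivative f (at x) (axis j 1)
                   + \<i> * frechet_derivative f (at x) (axis j \<i>)) / 2"

definition complex_tangent :: "(complex^2 \<Rightarrow> real) \<Rightarrow> complex^2 \<Rightarrow> complex^2 \<Rightarrow> bool" where
  "complex_tangent \<rho> p w \<longleftrightarrow>
     (\<Sum>j\<in>UNIV. wirt_z j (\<lambda>q. complex_of_real (\<rho> q)) p * w $ j) = 0"

definition levi_form :: "(complex^2 \<Rightarrow> real) \<Rightarrow> complex^2 \<Rightarrow> complex^2 \<Rightarrow> complex" where
  "levi_form \<rho> p w =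
     (\<Sum>j\<in>UNIV. \<Sum>k\<in>UNIV.
        wirt_z j (wirt_zbar k (\<lambda>q. complex_of_real (\<rho> q))) p * w $ j * cnj (w $ k))"

definition levi_flat :: "(complex^2) set \<Rightarrow> (complex^2 \<Rightarrow> real) \<Rightarrow> bool" where
  "levi_flat U \<rho> \<longleftrightarrow>
     (\<forall>p\<in>U. \<rho> p = 0 \<longrightarrow> (\<forall>w. complex_tangent \<rho> p w \<longrightarrow> levi_form \<rho> p w = 0))"

text \<open>Piecewise smooth Levi-flat boundary, with defining functions rho_0..rho_(m-1) on U.
 The wedge condition d rho_k1 \<and> ... \<and> d rho_kl \<noteq> 0 is linear independence of the differentials.\<close>
definition pw_smooth_levi_flat :: "(complex^2) set \<Rightarrow> (complex^2) set \<Rightarrow> nat \<Rightarrow> (nat \<Rightarrow> complex^2 \<Rightarrow> real) \<Rightarrow> bool" where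
  "pw_smooth_levi_flat D U m \<rho> \<longleftrightarrow>
     open U \<and> closure D \<subseteq> U \<and>
     (\<forall>k<m. smooth_on U (\<rho> k)) \<and>
     D = {q\<in>U. \<forall>k<m. \<rho> k q < 0} \<and>
     (\<forall>K q. K \<subseteq> {..<m} \<and> q \<in> U \<and> (\<forall>k\<in>K. \<rho> k q = 0) \<longrightarrow>
        (\<forall>c::nat\<Rightarrow>real. (\<forall>v. (\<Sum>k\<in>K. c k * frechet_derivative (\<rho> k) (at q) v) = 0)
             \<longrightarrow> (\<forall>k\<in>K. c k = 0))) \<and>
     (\<forall>k<m. levi_flat U (\<rho> k))"

definition holo_map_on :: "(complex^2) set \<Rightarrow> (complex^2 \<Rightarrow> complex^2) \<Rightarrow> bool" where
  "holo_map_on A g \<longleftrightarrow>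
     (\<forall>x\<in>A. \<exists>L. (g has_derivative L) (at x) \<and> (\<forall>c v. L (c *s v) = c *s L v))"

end

theory Submission
  imports Defs "HOL-Complex_Analysis.Cauchy_Integral_Formula"
begin

text \<open>Write \<open>\<rho> = \<rho>\<^sub>k\<^sub>0\<close> and \<open>S = {\<rho> = 0}\<close>. Since \<open>g\<close> maps into \<open>closure D\<close>, \<open>\<rho> \<circ> g \<le> 0\<close>, and the set
  of points of \<open>Dh\<close> mapped into \<open>S\<close> is relatively closed; as \<open>Dh\<close> is connected it suffices to
  show that it is open.

  Levi-flatness says that the Levi form of \<open>\<rho>\<close> on the complex tangent field \<open>\<tau>\<close> vanishes on \<open>S\<close>;
  since \<open>d\<rho> \<noteq> 0\<close> there, it is \<open>O(\<bar>\<rho>\<bar>)\<close> nearby. Splitting a vector into its \<open>\<tau>\<close>-component and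
  a normal component gives \<open>- L\<^sub>\<rho>(w) \<le> K \<bar>\<rho>\<bar> \<bar>w\<bar>\<^sup>2 + K (\<bar>d\<rho>(w)\<bar> + \<bar>d\<rho>(i w)\<bar>) \<bar>w\<bar>\<close> near \<open>S\<close>.
  Now take \<open>y\<close> with \<open>\<rho> (g y) < 0\<close> close to a point of contact, a nearest point \<open>z\<^sub>s\<close> with
  \<open>\<rho> (g z\<^sub>s) = 0\<close>, and the complex line through \<open>y\<close> and \<open>z\<^sub>s\<close>. Along it \<open>u = - \<rho> \<circ> g\<close> has Laplacian
  \<open>- L\<^sub>\<rho>(g')\<close>, so \<open>\<Delta>u \<le> C (u + \<bar>\<nabla>u\<bar>)\<close>; moreover \<open>u > 0\<close> on the disc of radius \<open>\<bar>z\<^sub>s - y\<bar>\<close> and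
  \<open>u (z\<^sub>s) = 0\<close>. Hopf's lemma gives \<open>\<nabla>u (z\<^sub>s) \<noteq> 0\<close>, contradicting that \<open>z\<^sub>s\<close> is a minimum of
  \<open>u \<ge> 0\<close>.\<close>

section \<open>Hopf's lemma for a planar differential inequality\<close>

lemma DERIV_local_min_second_order:
  fixes f f' :: "real \<Rightarrow> real"
  assumes "\<delta> > 0"
    and f': "\<And>t. \<bar>t\<bar> < \<delta> \<Longrightarrow> (f has_real_derivative f' t) (at t)"
    and f'': "(f' has_real_derivative a) (at 0)"
    and min: "\<And>t. \<bar>t\<bar> < \<delta> \<Longrightarrow> f 0 \<le> f t"
  shows "f' 0 = 0 \<and> a \<ge> 0"
proof
  show f'0: "f' 0 = 0"
    using DERIV_local_min[OF f'[of 0] \<open>\<delta> > 0\<close>] min \<open>\<delta> > 0\<close> by (auto simp: abs_minus_commute)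
  show "a \<ge> 0"
  proof (rule ccontr)
    assume "\<not> a \<ge> 0"
    then obtain d where d: "d > 0" and lt: "\<And>h. h > 0 \<Longrightarrow> h < d \<Longrightarrow> f' (0 + h) < f' 0"
      using DERIV_neg_dec_right[OF f''] by (meson not_le)
    define e where "e = min d \<delta> / 2"
    have e: "e > 0" "e < d" "e < \<delta>" using d \<open>\<delta> > 0\<close> by (auto simp: e_def)
    have "f e < f 0"
    proof (rule DERIV_neg_imp_decreasing_open[OF e(1)])
      show "\<exists>y. (f has_real_derivative y) (at x) \<and> y < 0" if "0 < x" "x < e" for x
        using lt[of x] f'[of x] f'0 e that by auto
      show "continuous_on {0..e} f"
        by (rule continuous_at_imp_continuous_on) (use f' e in \<open>force intro: DERIV_isCont\<close>)
    qed
    then show False using min[of e] e by auto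
  qed
qed

lemma local_min_along_line:
  fixes u ux uxx :: "complex \<Rightarrow> real" and e :: complex
  assumes ux: "\<And>\<mu>. \<mu> \<in> S \<Longrightarrow> ((\<lambda>t. u (\<mu> + of_real t * e)) has_real_derivative ux \<mu>) (at 0)"
    and uxx: "\<And>\<mu>. \<mu> \<in> S \<Longrightarrow> ((\<lambda>t. ux (\<mu> + of_real t * e)) has_real_derivative uxx \<mu>) (at 0)"
    and "\<delta> > 0"
    and line: "\<And>t. \<bar>t\<bar> < \<delta> \<Longrightarrow> z + of_real t * e \<in> S"
    and min: "\<And>t. \<bar>t\<bar> < \<delta> \<Longrightarrow> u z \<le> u (z + of_real t * e)"
  shows "ux z = 0 \<and> uxx z \<ge> 0"
proof -
  have shift: "((\<lambda>s. F (z + of_real s * e)) has_real_derivative G (z + of_real t * e)) (at t)"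
    if "((\<lambda>s. F ((z + of_real t * e) + of_real s * e)) has_real_derivative G (z + of_real t * e)) (at 0)"
    for F G :: "complex \<Rightarrow> real" and t
  proof -
    have "((\<lambda>s. F (z + of_real (s + t) * e)) has_real_derivative G (z + of_real t * e)) (at 0)"
      using that by (simp add: algebra_simps)
    then show ?thesis using DERIV_shift[of "\<lambda>s. F (z + of_real s * e)" _ 0 t] by simp
  qed
  have "(\<lambda>t. ux (z + of_real t * e)) 0 = 0 \<and> uxx z \<ge> 0"
  proof (rule DERIV_local_min_second_order[OF \<open>\<delta> > 0\<close>, where f="\<lambda>t. u (z + of_real t * e)"])
    show "((\<lambda>t. u (z + of_real t * e)) has_real_derivative ux (z + of_real t * e)) (at t)"
      if "\<bar>t\<bar> < \<delta>" for t
      by (rule shift) (use ux[OF line[OF that]] in simp)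
    show "((\<lambda>t. ux (z + of_real t * e)) has_real_derivative uxx z) (at 0)"
      using uxx[OF line[of 0]] \<open>\<delta> > 0\<close> by simp
    show "u (z + of_real 0 * e) \<le> u (z + of_real t * e)" if "\<bar>t\<bar> < \<delta>" for t
      using min[OF that] by simp
  qed
  then show ?thesis by simp
qed

lemma DERIV_nonpos_if_left_min:
  fixes f :: "real \<Rightarrow> real"
  assumes "(f has_real_derivative l) (at x)" "d > 0" "\<And>h. 0 < h \<Longrightarrow> h < d \<Longrightarrow> f x \<le> f (x - h)"
  shows "l \<le> 0"
proof (rule ccontr)
  assume "\<not> l \<le> 0"
  then obtain d' where "d' > 0" and d': "\<And>h. 0 < h \<Longrightarrow> h < d' \<Longrightarrow> f (x - h) < f x"
    using DERIV_pos_inc_left[OF assms(1)] by force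
  define h where "h = min d d' / 2"
  have "0 < h" "h < d" "h < d'" using \<open>d > 0\<close> \<open>d' > 0\<close> by (auto simp: h_def)
  then show False using d' assms(3) by force
qed

lemma negative_min_in_interior:
  fixes w :: "'a::topological_space \<Rightarrow> real"
  assumes "compact K" "continuous_on K w"
    and bdry: "\<And>z. z \<in> K - interior K \<Longrightarrow> w z \<ge> 0"
    and "z0 \<in> K" "w z0 < 0"
  obtains z1 where "z1 \<in> interior K" "w z1 < 0" "\<And>z. z \<in> K \<Longrightarrow> w z1 \<le> w z"
proof -
  obtain z1 where z1: "z1 \<in> K" "\<And>z. z \<in> K \<Longrightarrow> w z1 \<le> w z"
    using continuous_attains_inf[OF assms(1) _ assms(2)] \<open>z0 \<in> K\<close> by blast
  have "w z1 < 0" using z1(2)[OF \<open>z0 \<in> K\<close>] \<open>w z0 < 0\<close> by simp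
  with z1 bdry that show ?thesis by force
qed

definition gauss :: "real \<Rightarrow> complex \<Rightarrow> real" where
  "gauss a z = exp (- a * ((Re z)\<^sup>2 + (Im z)\<^sup>2))"

lemma gauss_pos: "gauss a z > 0"
  by (simp add: gauss_def)

lemma gauss_cmod: "gauss a z = exp (- a * (cmod z)\<^sup>2)"
  by (simp add: gauss_def cmod_power2)

lemma gauss_le_1: "a \<ge> 0 \<Longrightarrow> gauss a z \<le> 1"
  by (simp add: gauss_def)

lemma continuous_on_gauss: "continuous_on S (gauss a)"
  unfolding gauss_def by (intro continuous_intros)

lemma DERIV_gauss_Re:
  "((\<lambda>t. gauss a (z + of_real t)) has_real_derivative
     - 2 * a * Re (z + of_real t) * gauss a (z + of_real t)) (at t)"
  unfolding gauss_def by (auto intro!: derivative_eq_intros simp: algebra_simps power2_eq_square)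

lemma DERIV_gauss_Im:
  "((\<lambda>t. gauss a (z + of_real t * \<i>)) has_real_derivative
     - 2 * a * Im (z + of_real t * \<i>) * gauss a (z + of_real t * \<i>)) (at t)"
  unfolding gauss_def by (auto intro!: derivative_eq_intros simp: algebra_simps power2_eq_square)

lemma DERIV_gauss_Re_Re:
  "((\<lambda>t. - 2 * a * Re (z + of_real t) * gauss a (z + of_real t)) has_real_derivative
     (4 * a\<^sup>2 * (Re z)\<^sup>2 - 2 * a) * gauss a z) (at 0)"
proof -
  have "((\<lambda>t. - 2 * a * (Re z + t)) has_real_derivative - 2 * a) (at 0)"
    by (auto intro!: derivative_eq_intros)
  from DERIV_mult[OF this DERIV_gauss_Re[of a z 0]] show ?thesis
    by (simp add: algebra_simps power2_eq_square)
qed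

lemma DERIV_gauss_Im_Im:
  "((\<lambda>t. - 2 * a * Im (z + of_real t * \<i>) * gauss a (z + of_real t * \<i>)) has_real_derivative
     (4 * a\<^sup>2 * (Im z)\<^sup>2 - 2 * a) * gauss a z) (at 0)"
proof -
  have "((\<lambda>t. - 2 * a * (Im z + t)) has_real_derivative - 2 * a) (at 0)"
    by (auto intro!: derivative_eq_intros)
  from DERIV_mult[OF this DERIV_gauss_Im[of a z 0]] show ?thesis
    by (simp add: algebra_simps power2_eq_square)
qed

text \<open>The barrier \<open>gauss a - exp (- a)\<close> is a strict supersolution of the differential
  inequality of the Hopf lemma on the annulus \<open>1/2 < \<bar>z\<bar> < 1\<close>.\<close>

lemma gauss_barrier:
  assumes "C \<ge> 0" "5 + 5 * C \<le> a" "1/2 < cmod z" "cmod z < 1"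
  shows "C * (gauss a z - exp (- a)) + C * (\<bar>2 * a * Re z * gauss a z\<bar> + \<bar>2 * a * Im z * gauss a z\<bar>)
         < (4 * a\<^sup>2 * (Re z)\<^sup>2 - 2 * a) * gauss a z + (4 * a\<^sup>2 * (Im z)\<^sup>2 - 2 * a) * gauss a z"
proof -
  define E where "E = gauss a z"
  have E: "E > 0" by (simp add: E_def gauss_pos)
  have a: "a \<ge> 5" using assms(1,2) by linarith
  have r: "1/4 < (Re z)\<^sup>2 + (Im z)\<^sup>2" "(Re z)\<^sup>2 + (Im z)\<^sup>2 < 1"
  proof -
    have "(1/2)\<^sup>2 < (cmod z)\<^sup>2" "(cmod z)\<^sup>2 < 1\<^sup>2"
      using power_strict_mono[OF assms(3), of 2] power_strict_mono[OF assms(4), of 2] by auto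
    then show "1/4 < (Re z)\<^sup>2 + (Im z)\<^sup>2" "(Re z)\<^sup>2 + (Im z)\<^sup>2 < 1"
      unfolding cmod_power2 by (simp_all add: power_divide)
  qed
  have "\<bar>Re z\<bar> \<le> 1" "\<bar>Im z\<bar> \<le> 1"
    using abs_Re_le_cmod[of z] abs_Im_le_cmod[of z] assms(4) by linarith+
  then have "2 * a * E * \<bar>Re z\<bar> \<le> 2 * a * E" "2 * a * E * \<bar>Im z\<bar> \<le> 2 * a * E"
    using a E by (simp_all add: mult_left_le)
  moreover have "\<bar>2 * a * Re z * E\<bar> = 2 * a * E * \<bar>Re z\<bar>" "\<bar>2 * a * Im z * E\<bar> = 2 * a * E * \<bar>Im z\<bar>"
    using a E by (simp_all add: abs_mult)
  ultimately have grad: "\<bar>2 * a * Re z * E\<bar> + \<bar>2 * a * Im z * E\<bar> \<le> 4 * a * E"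
    by linarith
  have "C * (E - exp (- a)) \<le> C * E"
    using assms(1) by (simp add: mult_left_mono)
  moreover have "C * (\<bar>2 * a * Re z * E\<bar> + \<bar>2 * a * Im z * E\<bar>) \<le> C * (4 * a * E)"
    using grad assms(1) by (rule mult_left_mono)
  ultimately have "C * (E - exp (- a)) + C * (\<bar>2 * a * Re z * E\<bar> + \<bar>2 * a * Im z * E\<bar>)
      \<le> (C + 4 * a * C) * E"
    by (simp add: algebra_simps)
  also have "\<dots> < (4 * a\<^sup>2 * ((Re z)\<^sup>2 + (Im z)\<^sup>2) - 4 * a) * E"
  proof (rule mult_strict_right_mono[OF _ E])
    have "a\<^sup>2 \<le> 4 * a\<^sup>2 * ((Re z)\<^sup>2 + (Im z)\<^sup>2)"
      using mult_left_mono[of 1 "4 * ((Re z)\<^sup>2 + (Im z)\<^sup>2)" "a\<^sup>2"] r by (simp add: algebra_simps)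
    moreover have "a * (5 + 5 * C) \<le> a\<^sup>2"
      using mult_left_mono[OF assms(2), of a] a by (simp add: power2_eq_square)
    moreover have "C \<le> C * a" using assms(1) a by (simp add: mult_le_cancel_left1)
    ultimately show "C + 4 * a * C < 4 * a\<^sup>2 * ((Re z)\<^sup>2 + (Im z)\<^sup>2) - 4 * a"
      using a by (simp add: algebra_simps)
  qed
  finally show ?thesis by (simp add: E_def algebra_simps)
qed

lemma hopf_barrier_local_min:
  fixes u ux uy uxx uyy :: "complex \<Rightarrow> real"
  assumes "C \<ge> 0" "5 + 5 * C \<le> a" "\<epsilon> > 0" "1/2 < cmod z1" "cmod z1 < 1"
    and "\<delta> > 0" "ball z1 \<delta> \<subseteq> ball 0 1"
    and ux: "\<And>z. cmod z < 1 \<Longrightarrow> ((\<lambda>t. u (z + of_real t)) has_real_derivative ux z) (at 0)"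
    and uxx: "\<And>z. cmod z < 1 \<Longrightarrow> ((\<lambda>t. ux (z + of_real t)) has_real_derivative uxx z) (at 0)"
    and uy: "\<And>z. cmod z < 1 \<Longrightarrow> ((\<lambda>t. u (z + of_real t * \<i>)) has_real_derivative uy z) (at 0)"
    and uyy: "\<And>z. cmod z < 1 \<Longrightarrow> ((\<lambda>t. uy (z + of_real t * \<i>)) has_real_derivative uyy z) (at 0)"
    and ineq: "uxx z1 + uyy z1 \<le> C * u z1 + C * (\<bar>ux z1\<bar> + \<bar>uy z1\<bar>)"
    and min: "\<And>z. z \<in> ball z1 \<delta> \<Longrightarrow>
      u z1 - \<epsilon> * (gauss a z1 - exp (- a)) \<le> u z - \<epsilon> * (gauss a z - exp (- a))"
  shows "u z1 - \<epsilon> * (gauss a z1 - exp (- a)) \<ge> 0"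
proof (rule ccontr)
  assume neg: "\<not> ?thesis"
  define w where "w z = u z - \<epsilon> * (gauss a z - exp (- a))" for z
  have line: "z1 + of_real t * e \<in> ball z1 \<delta> \<inter> ball 0 1" if "\<bar>t\<bar> < \<delta>" "cmod e = 1" for t e
  proof -
    have "z1 + of_real t * e \<in> ball z1 \<delta>" using that by (simp add: dist_norm norm_mult)
    then show ?thesis using assms(7) by blast
  qed
  have Dx: "ux z1 - \<epsilon> * (- 2 * a * Re z1 * gauss a z1) = 0 \<and>
      uxx z1 - \<epsilon> * ((4 * a\<^sup>2 * (Re z1)\<^sup>2 - 2 * a) * gauss a z1) \<ge> 0"
  proof (rule local_min_along_line[where S="ball 0 1" and e=1 and u=w, OF _ _ \<open>\<delta> > 0\<close>])
    show "((\<lambda>t. w (z + of_real t * 1)) has_real_derivative ux z - \<epsilon> * (- 2 * a * Re z * gauss a z)) (at 0)"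
      if "z \<in> ball 0 1" for z
      using that DERIV_diff[OF ux DERIV_cmult[OF DERIV_diff[OF DERIV_gauss_Re[of a z 0] DERIV_const]]]
      by (simp add: w_def)
    show "((\<lambda>t. ux (z + of_real t * 1) - \<epsilon> * (- 2 * a * Re (z + of_real t * 1) * gauss a (z + of_real t * 1)))
        has_real_derivative uxx z - \<epsilon> * ((4 * a\<^sup>2 * (Re z)\<^sup>2 - 2 * a) * gauss a z)) (at 0)"
      if "z \<in> ball 0 1" for z
      using that DERIV_diff[OF uxx DERIV_cmult[OF DERIV_gauss_Re_Re]] by simp
  qed (use line[of _ 1] min in \<open>auto simp: w_def\<close>)
  have Dy: "uy z1 - \<epsilon> * (- 2 * a * Im z1 * gauss a z1) = 0 \<and>
      uyy z1 - \<epsilon> * ((4 * a\<^sup>2 * (Im z1)\<^sup>2 - 2 * a) * gauss a z1) \<ge> 0"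
  proof (rule local_min_along_line[where S="ball 0 1" and e=\<i> and u=w, OF _ _ \<open>\<delta> > 0\<close>])
    show "((\<lambda>t. w (z + of_real t * \<i>)) has_real_derivative uy z - \<epsilon> * (- 2 * a * Im z * gauss a z)) (at 0)"
      if "z \<in> ball 0 1" for z
      using that DERIV_diff[OF uy DERIV_cmult[OF DERIV_diff[OF DERIV_gauss_Im[of a z 0] DERIV_const]]]
      by (simp add: w_def)
    show "((\<lambda>t. uy (z + of_real t * \<i>) - \<epsilon> * (- 2 * a * Im (z + of_real t * \<i>) * gauss a (z + of_real t * \<i>)))
        has_real_derivative uyy z - \<epsilon> * ((4 * a\<^sup>2 * (Im z)\<^sup>2 - 2 * a) * gauss a z)) (at 0)"
      if "z \<in> ball 0 1" for z
      using that DERIV_diff[OF uyy DERIV_cmult[OF DERIV_gauss_Im_Im]] by simp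
  qed (use line[of _ \<i>] min in \<open>auto simp: w_def\<close>)
  then have X: "ux z1 = - (\<epsilon> * (2 * a * Re z1 * gauss a z1))" "uy z1 = - (\<epsilon> * (2 * a * Im z1 * gauss a z1))"
    using Dx by (simp_all add: algebra_simps)
  have "\<epsilon> * ((4 * a\<^sup>2 * (Re z1)\<^sup>2 - 2 * a) * gauss a z1 + (4 * a\<^sup>2 * (Im z1)\<^sup>2 - 2 * a) * gauss a z1)
      \<le> uxx z1 + uyy z1"
    using Dx Dy by (simp add: algebra_simps)
  also have "\<dots> \<le> C * u z1 + C * (\<bar>ux z1\<bar> + \<bar>uy z1\<bar>)"
    by (rule ineq)
  also have "\<dots> \<le> \<epsilon> * (C * (gauss a z1 - exp (- a))
      + C * (\<bar>2 * a * Re z1 * gauss a z1\<bar> + \<bar>2 * a * Im z1 * gauss a z1\<bar>))"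
  proof -
    have "C * u z1 \<le> C * (\<epsilon> * (gauss a z1 - exp (- a)))"
      using neg \<open>C \<ge> 0\<close> by (intro mult_left_mono) simp_all
    moreover have "\<bar>ux z1\<bar> = \<epsilon> * \<bar>2 * a * Re z1 * gauss a z1\<bar>" "\<bar>uy z1\<bar> = \<epsilon> * \<bar>2 * a * Im z1 * gauss a z1\<bar>"
      using X \<open>\<epsilon> > 0\<close> by (simp_all only: abs_minus_cancel abs_mult abs_of_pos)
    ultimately show ?thesis by (simp add: algebra_simps)
  qed
  also have "\<dots> < \<epsilon> * ((4 * a\<^sup>2 * (Re z1)\<^sup>2 - 2 * a) * gauss a z1 + (4 * a\<^sup>2 * (Im z1)\<^sup>2 - 2 * a) * gauss a z1)"
    using mult_strict_left_mono[OF gauss_barrier[OF assms(1,2,4,5)] \<open>\<epsilon> > 0\<close>] .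
  finally show False by simp
qed

lemma hopf_barrier_nonneg:
  fixes u ux uy uxx uyy :: "complex \<Rightarrow> real"
  assumes "C \<ge> 0" "5 + 5 * C \<le> a" "\<epsilon> > 0"
    and cont: "continuous_on (cball 0 1) u"
    and circles: "\<And>z. cmod z = 1/2 \<or> cmod z = 1 \<Longrightarrow> u z - \<epsilon> * (gauss a z - exp (- a)) \<ge> 0"
    and ux: "\<And>z. cmod z < 1 \<Longrightarrow> ((\<lambda>t. u (z + of_real t)) has_real_derivative ux z) (at 0)"
    and uxx: "\<And>z. cmod z < 1 \<Longrightarrow> ((\<lambda>t. ux (z + of_real t)) has_real_derivative uxx z) (at 0)"
    and uy: "\<And>z. cmod z < 1 \<Longrightarrow> ((\<lambda>t. u (z + of_real t * \<i>)) has_real_derivative uy z) (at 0)"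
    and uyy: "\<And>z. cmod z < 1 \<Longrightarrow> ((\<lambda>t. uy (z + of_real t * \<i>)) has_real_derivative uyy z) (at 0)"
    and ineq: "\<And>z. cmod z < 1 \<Longrightarrow> uxx z + uyy z \<le> C * u z + C * (\<bar>ux z\<bar> + \<bar>uy z\<bar>)"
    and "1/2 \<le> cmod z" "cmod z \<le> 1"
  shows "u z - \<epsilon> * (gauss a z - exp (- a)) \<ge> 0"
proof -
  define w where "w z = u z - \<epsilon> * (gauss a z - exp (- a))" for z
  define A where "A = cball (0::complex) 1 - ball 0 (1/2)"
  have A: "z \<in> A \<longleftrightarrow> 1/2 \<le> cmod z \<and> cmod z \<le> 1" for z
    by (auto simp: A_def)
  have w_circles: "w z \<ge> 0" if "cmod z = 1/2 \<or> cmod z = 1" for z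
    using circles[OF that] by (simp add: w_def)
  have "{z. 1/2 < cmod z \<and> cmod z < 1} \<subseteq> interior A"
    by (rule interior_maximal) (auto simp: A intro!: open_Collect_conj open_Collect_less continuous_intros)
  then have w_bdry: "w z \<ge> 0" if "z \<in> A - interior A" for z
    using that w_circles by (force simp: A)
  have "w z \<ge> 0" if "z \<in> A" for z
  proof (rule ccontr)
    assume "\<not> w z \<ge> 0"
    moreover have "continuous_on A w"
      unfolding w_def A_def by (intro continuous_intros continuous_on_subset[OF cont] continuous_on_gauss) auto
    ultimately obtain z1 where z1: "z1 \<in> interior A" "w z1 < 0" and z1_min: "\<And>z. z \<in> A \<Longrightarrow> w z1 \<le> w z"
      using negative_min_in_interior[of A w z] \<open>z \<in> A\<close> w_bdry by (auto simp: A_def compact_diff)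
    obtain \<delta> where "\<delta> > 0" and \<delta>: "ball z1 \<delta> \<subseteq> interior A"
      using z1(1) open_contains_ball by blast
    have "z1 \<in> A" using z1(1) interior_subset by blast
    moreover have "cmod z1 \<noteq> 1/2" "cmod z1 \<noteq> 1" using w_circles[of z1] z1(2) by auto
    ultimately have r: "1/2 < cmod z1" "cmod z1 < 1" by (auto simp: A)
    have "interior A \<subseteq> ball 0 1" using interior_mono[of A "cball 0 1"] by (auto simp: A_def)
    have "w z1 \<ge> 0"
      unfolding w_def
    proof (rule hopf_barrier_local_min[where ux=ux and uxx=uxx and uy=uy and uyy=uyy and C=C])
      show "ball z1 \<delta> \<subseteq> ball 0 1" using \<delta> \<open>interior A \<subseteq> ball 0 1\<close> by blast
      show "u z1 - \<epsilon> * (gauss a z1 - exp (- a)) \<le> u z - \<epsilon> * (gauss a z - exp (- a))" if "z \<in> ball z1 \<delta>" for z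
        using z1_min[of z] \<delta> interior_subset[of A] that unfolding w_def by blast
      show "uxx z1 + uyy z1 \<le> C * u z1 + C * (\<bar>ux z1\<bar> + \<bar>uy z1\<bar>)"
        using ineq r by simp
    qed (use assms(1-3) \<open>\<delta> > 0\<close> r ux uxx uy uyy in simp_all)
    with z1(2) show False by simp
  qed
  then show ?thesis using assms(11,12) by (simp add: A w_def)
qed

lemma hopf_lemma:
  fixes u ux uy uxx uyy :: "complex \<Rightarrow> real"
  assumes "C \<ge> 0"
    and cont: "continuous_on (cball 0 1) u"
    and bdry: "\<And>z. cmod z = 1 \<Longrightarrow> u z \<ge> 0"
    and pos: "\<And>z. cmod z < 1 \<Longrightarrow> u z > 0"
    and "u 1 = 0"
    and ux: "\<And>z. cmod z \<le> 1 \<Longrightarrow> ((\<lambda>t. u (z + of_real t)) has_real_derivative ux z) (at 0)"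
    and uxx: "\<And>z. cmod z < 1 \<Longrightarrow> ((\<lambda>t. ux (z + of_real t)) has_real_derivative uxx z) (at 0)"
    and uy: "\<And>z. cmod z < 1 \<Longrightarrow> ((\<lambda>t. u (z + of_real t * \<i>)) has_real_derivative uy z) (at 0)"
    and uyy: "\<And>z. cmod z < 1 \<Longrightarrow> ((\<lambda>t. uy (z + of_real t * \<i>)) has_real_derivative uyy z) (at 0)"
    and ineq: "\<And>z. cmod z < 1 \<Longrightarrow> uxx z + uyy z \<le> C * u z + C * (\<bar>ux z\<bar> + \<bar>uy z\<bar>)"
  shows "ux 1 < 0"
proof -
  define a where "a = 5 + 5 * C"
  obtain zm where zm: "zm \<in> sphere 0 (1/2)" and zm_min: "\<And>z. z \<in> sphere 0 (1/2) \<Longrightarrow> u zm \<le> u z"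
  proof (rule continuous_attains_inf[OF compact_sphere, THEN bexE])
    show "continuous_on (sphere 0 (1/2)) u" by (rule continuous_on_subset[OF cont]) auto
  qed auto
  define \<epsilon> where "\<epsilon> = u zm / 2"
  have "\<epsilon> > 0" using pos zm by (simp add: \<epsilon>_def)
  define w where "w z = u z - \<epsilon> * (gauss a z - exp (- a))" for z
  have w_circles: "w z \<ge> 0" if "cmod z = 1/2 \<or> cmod z = 1" for z
    using that
  proof
    assume "cmod z = 1/2"
    then have "2 * \<epsilon> \<le> u z" using zm_min[of z] by (simp add: \<epsilon>_def)
    moreover have "gauss a z \<le> 1" using \<open>C \<ge> 0\<close> by (intro gauss_le_1) (simp add: a_def)
    then have "gauss a z - exp (- a) \<le> 1" using exp_gt_zero[of "- a"] by linarith
    then have "\<epsilon> * (gauss a z - exp (- a)) \<le> \<epsilon>" using \<open>\<epsilon> > 0\<close> by (simp add: mult_left_le)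
    ultimately show ?thesis using \<open>\<epsilon> > 0\<close> unfolding w_def by linarith
  qed (simp add: w_def gauss_cmod bdry)
  have w_nonneg: "w z \<ge> 0" if "1/2 \<le> cmod z" "cmod z \<le> 1" for z
    unfolding w_def
    by (rule hopf_barrier_nonneg[where ux=ux and uxx=uxx and uy=uy and uyy=uyy and C=C, OF \<open>C \<ge> 0\<close> _ \<open>\<epsilon> > 0\<close> cont])
       (use w_circles ux uxx uy uyy ineq that in \<open>simp_all add: a_def w_def\<close>)
  have "ux 1 + \<epsilon> * (2 * a * exp (- a)) \<le> 0"
  proof (rule DERIV_nonpos_if_left_min[where f="\<lambda>t. w (1 + of_real t)" and d="1/2"])
    show "((\<lambda>t. w (1 + of_real t)) has_real_derivative ux 1 + \<epsilon> * (2 * a * exp (- a))) (at 0)"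
      using DERIV_diff[OF ux DERIV_cmult[OF DERIV_diff[OF DERIV_gauss_Re[of a 1 0] DERIV_const]]]
      by (simp add: w_def gauss_cmod)
    show "w (1 + of_real 0) \<le> w (1 + of_real (0 - h))" if "0 < h" "h < 1/2" for h
    proof -
      have "1 + of_real (0 - h) = complex_of_real (1 - h)" by simp
      then have "1/2 \<le> cmod (1 + of_real (0 - h))" "cmod (1 + of_real (0 - h)) \<le> 1"
        using that by (simp_all del: of_real_diff)
      then show ?thesis using w_nonneg \<open>u 1 = 0\<close> by (simp add: w_def gauss_cmod)
    qed
  qed simp
  moreover have "\<epsilon> * (2 * a * exp (- a)) > 0" using \<open>\<epsilon> > 0\<close> \<open>C \<ge> 0\<close> by (simp add: a_def)
  ultimately show ?thesis by linarith
qed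

section \<open>The Levi form of a \<open>C\<^sup>3\<close> defining function\<close>

lemma Ck_on_1:
  "Ck_on 1 U f \<longleftrightarrow> (\<exists>f'. (\<forall>x\<in>U. (f has_derivative f' x) (at x)) \<and> (\<forall>v. continuous_on U (\<lambda>x. f' x v)))"
  by (simp add: One_nat_def)

lemma Ck_on_1_imp_continuous_on: "Ck_on 1 U f \<Longrightarrow> continuous_on U f"
  unfolding Ck_on_1 by (metis continuous_at_imp_continuous_on has_derivative_continuous)

lemma Ck_on_1_const: "Ck_on 1 U (\<lambda>x. c)"
  unfolding Ck_on_1 by (rule exI[of _ "\<lambda>x v. 0"]) auto

lemma Ck_on_1_add:
  fixes f g :: "'a::real_normed_vector \<Rightarrow> real"
  assumes "Ck_on 1 U f" "Ck_on 1 U g"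
  shows "Ck_on 1 U (\<lambda>x. f x + g x)"
proof -
  obtain f' where f: "\<forall>x\<in>U. (f has_derivative f' x) (at x)" "\<forall>v. continuous_on U (\<lambda>x. f' x v)"
    using assms(1) unfolding Ck_on_1 by auto
  obtain g' where g: "\<forall>x\<in>U. (g has_derivative g' x) (at x)" "\<forall>v. continuous_on U (\<lambda>x. g' x v)"
    using assms(2) unfolding Ck_on_1 by auto
  show ?thesis unfolding Ck_on_1
    by (rule exI[of _ "\<lambda>x v. f' x v + g' x v"]) (use f g in \<open>auto intro!: has_derivative_add continuous_intros\<close>)
qed

lemma Ck_on_1_mult:
  fixes f g :: "'a::real_normed_vector \<Rightarrow> real"
  assumes "Ck_on 1 U f" "Ck_on 1 U g"
  shows "Ck_on 1 U (\<lambda>x. f x * g x)"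
proof -
  have "continuous_on U f" "continuous_on U g"
    using assms Ck_on_1_imp_continuous_on by auto
  moreover obtain f' where "\<forall>x\<in>U. (f has_derivative f' x) (at x)" "\<forall>v. continuous_on U (\<lambda>x. f' x v)"
    using assms(1) unfolding Ck_on_1 by auto
  moreover obtain g' where "\<forall>x\<in>U. (g has_derivative g' x) (at x)" "\<forall>v. continuous_on U (\<lambda>x. g' x v)"
    using assms(2) unfolding Ck_on_1 by auto
  ultimately show ?thesis unfolding Ck_on_1
    by (intro exI[of _ "\<lambda>x v. f x * g' x v + f' x v * g x"])
       (auto intro!: has_derivative_mult continuous_intros)
qed

lemma Ck_on_1_minus: "Ck_on 1 U f \<Longrightarrow> Ck_on 1 U (\<lambda>x. - f x)"
  for f :: "'a::real_normed_vector \<Rightarrow> real"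
  using Ck_on_1_mult[OF Ck_on_1_const[of U "-1"]] by simp

lemma Ck_on_1_cong: "open U \<Longrightarrow> (\<And>x. x \<in> U \<Longrightarrow> f x = g x) \<Longrightarrow> Ck_on 1 U f \<Longrightarrow> Ck_on 1 U g"
  unfolding Ck_on_1 by (metis has_derivative_transform_within_open)

lemma Basis_complex2: "(Basis :: (complex^2) set) = {axis 1 1, axis 1 \<i>, axis 2 1, axis 2 \<i>}"
  by (auto simp: Basis_vec_def UNIV_2 Basis_complex_def)

lemma linear_expand_complex2:
  assumes "linear L"
  shows "L (w::complex^2) = Re (w$1) *\<^sub>R L (axis 1 1) + Im (w$1) *\<^sub>R L (axis 1 \<i>)
                          + Re (w$2) *\<^sub>R L (axis 2 1) + Im (w$2) *\<^sub>R L (axis 2 \<i>)"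
proof -
  interpret linear L by fact
  have "w = Re (w$1) *\<^sub>R axis 1 1 + Im (w$1) *\<^sub>R axis 1 \<i> + Re (w$2) *\<^sub>R axis 2 1 + Im (w$2) *\<^sub>R axis 2 \<i>"
    by (simp add: vec_eq_iff forall_2 axis_def complex_eq_iff)
  then show ?thesis by (metis add scale)
qed

lemma sum_axis_complexify:
  fixes X :: "complex^2 \<Rightarrow> complex"
  assumes "linear X"
  shows "(\<Sum>j\<in>UNIV. (X (axis j 1) - \<i> * X (axis j \<i>)) * w$j) = X w - \<i> * X (\<i> *s w)"
  using linear_expand_complex2[OF assms, of w] linear_expand_complex2[OF assms, of "\<i> *s w"]
  by (simp add: sum_2 complex_eq_iff scaleR_conv_of_real algebra_simps)

lemma sum_cnj_axis_complexify:
  fixes Y :: "complex^2 \<Rightarrow> complex"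
  assumes "linear Y"
  shows "(\<Sum>k\<in>UNIV. cnj (w$k) * (Y (axis k 1) + \<i> * Y (axis k \<i>))) = Y w + \<i> * Y (\<i> *s w)"
  using linear_expand_complex2[OF assms, of w] linear_expand_complex2[OF assms, of "\<i> *s w"]
  by (simp add: sum_2 complex_eq_iff scaleR_conv_of_real algebra_simps)

text \<open>A third derivative is needed
  because the Levi form along the complex tangent field is differentiated (it must be \<open>C\<^sup>1\<close>).\<close>

locale C3_function =
  fixes U :: "(complex^2) set" and \<rho> :: "complex^2 \<Rightarrow> real"
    and D :: "complex^2 \<Rightarrow> complex^2 \<Rightarrow> real"
    and H :: "complex^2 \<Rightarrow> complex^2 \<Rightarrow> complex^2 \<Rightarrow> real"
  assumes open_U: "open U"
    and has_derivative_rho: "\<And>x. x \<in> U \<Longrightarrow> (\<rho> has_derivative D x) (at x)"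
    and has_derivative_D: "\<And>x v. x \<in> U \<Longrightarrow> ((\<lambda>x. D x v) has_derivative H x v) (at x)"
    and Ck_on_1_H: "\<And>v w. Ck_on 1 U (\<lambda>x. H x v w)"

lemma smooth_on_imp_C3_function:
  assumes "open U" "smooth_on U \<rho>"
  shows "\<exists>D H. C3_function U \<rho> D H"
proof -
  have "Ck_on 3 U \<rho>" using assms(2) unfolding smooth_on_def by blast
  then obtain D where D: "\<forall>x\<in>U. (\<rho> has_derivative D x) (at x)"
    and "\<forall>v. Ck_on 2 U (\<lambda>x. D x v)"
    by (auto simp: numeral_eq_Suc)
  then have "\<forall>v. \<exists>H. (\<forall>x\<in>U. ((\<lambda>x. D x v) has_derivative H x) (at x)) \<and> (\<forall>w. Ck_on 1 U (\<lambda>x. H x w))"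
    by (simp add: numeral_eq_Suc)
  then obtain H where "\<And>v. \<forall>x\<in>U. ((\<lambda>x. D x v) has_derivative H v x) (at x)"
    and "\<And>v w. Ck_on 1 U (\<lambda>x. H v x w)"
    by metis
  with assms(1) D have "C3_function U \<rho> D (\<lambda>x v. H v x)"
    by unfold_locales auto
  then show ?thesis by blast
qed

definition levi_quad :: "(complex^2 \<Rightarrow> complex^2 \<Rightarrow> complex^2 \<Rightarrow> real) \<Rightarrow> complex^2 \<Rightarrow> complex^2 \<Rightarrow> real" where
  "levi_quad H x v = H x v v + H x (\<i> *s v) (\<i> *s v)"

context C3_function
begin

lemma continuous_on_rho: "continuous_on U \<rho>"
  by (metis continuous_at_imp_continuous_on has_derivative_continuous has_derivative_rho)

lemma continuous_on_D: "continuous_on U (\<lambda>x. D x v)"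
  by (metis (no_types, lifting) continuous_at_imp_continuous_on has_derivative_continuous has_derivative_D)

lemma continuous_on_H: "continuous_on U (\<lambda>x. H x v w)"
  using Ck_on_1_H Ck_on_1_imp_continuous_on by blast

lemma Ck_on_1_D: "Ck_on 1 U (\<lambda>x. D x v)"
  unfolding Ck_on_1 using has_derivative_D continuous_on_H by (intro exI[of _ "\<lambda>x. H x v"]) blast

lemma bounded_linear_D: "x \<in> U \<Longrightarrow> bounded_linear (D x)"
  using has_derivative_rho has_derivative_bounded_linear by blast

lemma bounded_linear_H: "x \<in> U \<Longrightarrow> bounded_linear (H x v)"
  using has_derivative_D has_derivative_bounded_linear by blast

lemma linear_D: "x \<in> U \<Longrightarrow> linear (D x)"
  using bounded_linear_D bounded_linear.linear by blast

lemma linear_H: "x \<in> U \<Longrightarrow> linear (H x v)"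
  using bounded_linear_H bounded_linear.linear by blast

lemma D_scaleR: "x \<in> U \<Longrightarrow> D x (c *\<^sub>R a) = c * D x a"
  using bounded_linear_D[of x] by (simp add: linear_simps)

lemma H_add_right: "x \<in> U \<Longrightarrow> H x v (a + b) = H x v a + H x v b"
  using bounded_linear_H[of x v] by (simp add: linear_simps)

lemma H_scaleR_right: "x \<in> U \<Longrightarrow> H x v (c *\<^sub>R a) = c * H x v a"
  using bounded_linear_H[of x v] by (simp add: linear_simps)

lemma H_add_left:
  assumes "x \<in> U"
  shows "H x (a + b) = (\<lambda>w. H x a w + H x b w)"
proof -
  have "((\<lambda>x. D x a + D x b) has_derivative (\<lambda>w. H x a w + H x b w)) (at x)"
    by (intro has_derivative_add has_derivative_D assms)
  moreover have "D y a + D y b = D y (a + b)" if "y \<in> U" for y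
    using bounded_linear_D[OF that] by (simp add: linear_simps)
  ultimately have "((\<lambda>x. D x (a + b)) has_derivative (\<lambda>w. H x a w + H x b w)) (at x)"
    by (rule has_derivative_transform_within_open[OF _ open_U assms])
  then show ?thesis using has_derivative_D[OF assms, of "a + b"] has_derivative_unique by blast
qed

lemma H_scaleR_left:
  assumes "x \<in> U"
  shows "H x (c *\<^sub>R a) = (\<lambda>w. c * H x a w)"
proof -
  have "((\<lambda>x. c * D x a) has_derivative (\<lambda>w. c * H x a w)) (at x)"
    by (intro has_derivative_mult_right has_derivative_D assms)
  moreover have "c * D y a = D y (c *\<^sub>R a)" if "y \<in> U" for y
    using bounded_linear_D[OF that] by (simp add: linear_simps)
  ultimately have "((\<lambda>x. D x (c *\<^sub>R a)) has_derivative (\<lambda>w. c * H x a w)) (at x)"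
    by (rule has_derivative_transform_within_open[OF _ open_U assms])
  then show ?thesis using has_derivative_D[OF assms, of "c *\<^sub>R a"] has_derivative_unique by blast
qed

lemma linear_H_left: "x \<in> U \<Longrightarrow> linear (\<lambda>a. H x a b)"
  by (rule linearI) (simp_all add: H_add_left H_scaleR_left)

lemma linear_of_real_D: "x \<in> U \<Longrightarrow> linear (\<lambda>v. complex_of_real (D x v))"
  using bounded_linear_D[of x] unfolding bounded_linear_def linear_iff
  by (simp add: scaleR_conv_of_real linear_simps)

lemma frechet_derivative_of_real_rho:
  "x \<in> U \<Longrightarrow> frechet_derivative (\<lambda>q. complex_of_real (\<rho> q)) (at x) = (\<lambda>v. complex_of_real (D x v))"
  by (rule frechet_derivative_at[symmetric]) (auto intro!: derivative_eq_intros has_derivative_rho)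

lemma wirt_z_rho:
  "x \<in> U \<Longrightarrow> wirt_z j (\<lambda>q. complex_of_real (\<rho> q)) x
     = (of_real (D x (axis j 1)) - \<i> * of_real (D x (axis j \<i>))) / 2"
  by (simp add: wirt_z_def frechet_derivative_of_real_rho)

lemma wirt_zbar_rho:
  "x \<in> U \<Longrightarrow> wirt_zbar j (\<lambda>q. complex_of_real (\<rho> q)) x
     = (of_real (D x (axis j 1)) + \<i> * of_real (D x (axis j \<i>))) / 2"
  by (simp add: wirt_zbar_def frechet_derivative_of_real_rho)

lemma complex_tangent_iff:
  assumes "x \<in> U"
  shows "complex_tangent \<rho> x w \<longleftrightarrow> D x w = 0 \<and> D x (\<i> *s w) = 0"
proof -
  have "complex_tangent \<rho> x w \<longleftrightarrow>
      (\<Sum>j\<in>UNIV. (of_real (D x (axis j 1)) - \<i> * of_real (D x (axis j \<i>))) * w$j) = 0"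
    unfolding complex_tangent_def wirt_z_rho[OF assms] by (simp add: sum_divide_distrib[symmetric])
  also have "\<dots> \<longleftrightarrow> of_real (D x w) - \<i> * of_real (D x (\<i> *s w)) = 0"
    using sum_axis_complexify[OF linear_of_real_D[OF assms], of w] by simp
  also have "\<dots> \<longleftrightarrow> D x w = 0 \<and> D x (\<i> *s w) = 0"
    by (simp add: complex_eq_iff)
  finally show ?thesis .
qed

lemma frechet_derivative_wirt_zbar_rho:
  assumes "p \<in> U"
  shows "frechet_derivative (wirt_zbar k (\<lambda>q. complex_of_real (\<rho> q))) (at p)
       = (\<lambda>u. (of_real (H p (axis k 1) u) + \<i> * of_real (H p (axis k \<i>) u)) / 2)"
proof -
  have d: "((\<lambda>x. (of_real (D x (axis k 1)) + \<i> * of_real (D x (axis k \<i>))) / 2) has_derivative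
      (\<lambda>u. (of_real (H p (axis k 1) u) + \<i> * of_real (H p (axis k \<i>) u)) / 2)) (at p)"
    by (auto intro!: derivative_eq_intros has_derivative_D assms)
  have "frechet_derivative (wirt_zbar k (\<lambda>q. complex_of_real (\<rho> q))) (at p)
      = frechet_derivative (\<lambda>x. (of_real (D x (axis k 1)) + \<i> * of_real (D x (axis k \<i>))) / 2) (at p)"
    by (rule frechet_derivative_transform_within_open[symmetric, OF _ open_U assms])
       (use d wirt_zbar_rho in \<open>auto simp: differentiable_def\<close>)
  also have "\<dots> = (\<lambda>u. (of_real (H p (axis k 1) u) + \<i> * of_real (H p (axis k \<i>) u)) / 2)"
    using frechet_derivative_at[OF d] by simp
  finally show ?thesis .
qed

lemma Re_levi_form:
  assumes "p \<in> U"
  shows "Re (levi_form \<rho> p w) = levi_quad H p w / 4"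
proof -
  define F where "F k u = (of_real (H p (axis k 1) u) + \<i> * of_real (H p (axis k \<i>) u)) / 2" for k u
  define Y where "Y v = complex_of_real (H p v w) - \<i> * complex_of_real (H p v (\<i> *s w))" for v
  have linear_F: "linear (F k)" for k
  proof (rule linearI)
    show "F k (a + b) = F k a + F k b" for a b
      by (simp add: F_def H_add_right[OF assms] field_simps)
    show "F k (r *\<^sub>R b) = r *\<^sub>R F k b" for r b
      by (simp add: F_def H_scaleR_right[OF assms]) (simp add: scaleR_conv_of_real field_simps)
  qed
  have linear_Y: "linear Y"
  proof (rule linearI)
    show "Y (a + b) = Y a + Y b" for a b
      by (simp add: Y_def H_add_left[OF assms] algebra_simps)
    show "Y (r *\<^sub>R b) = r *\<^sub>R Y b" for r b
      by (simp add: Y_def H_scaleR_left[OF assms]) (simp add: scaleR_conv_of_real algebra_simps)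
  qed
  have "levi_form \<rho> p w
      = (\<Sum>k\<in>UNIV. cnj (w$k) * (\<Sum>j\<in>UNIV. (F k (axis j 1) - \<i> * F k (axis j \<i>)) * w$j)) / 2"
    by (simp add: levi_form_def wirt_z_def frechet_derivative_wirt_zbar_rho[OF assms]
                  F_def[symmetric] sum_2 field_simps)
  also have "\<dots> = (\<Sum>k\<in>UNIV. cnj (w$k) * (Y (axis k 1) + \<i> * Y (axis k \<i>))) / 4"
    unfolding sum_axis_complexify[OF linear_F] by (simp add: F_def Y_def sum_2 field_simps)
  also have "\<dots> = (Y w + \<i> * Y (\<i> *s w)) / 4"
    unfolding sum_cnj_axis_complexify[OF linear_Y] ..
  finally have L: "levi_form \<rho> p w = (Y w + \<i> * Y (\<i> *s w)) / 4" .
  show ?thesis unfolding L by (simp add: Y_def levi_quad_def)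
qed

lemma levi_flat_imp_levi_quad_eq_0:
  assumes "levi_flat U \<rho>" "p \<in> U" "\<rho> p = 0" "D p w = 0" "D p (\<i> *s w) = 0"
  shows "levi_quad H p w = 0"
proof -
  have "complex_tangent \<rho> p w" using complex_tangent_iff[OF assms(2)] assms(4,5) by simp
  then have "levi_form \<rho> p w = 0" using assms(1-3) unfolding levi_flat_def by blast
  then show ?thesis using Re_levi_form[OF assms(2), of w] by simp
qed

end

section \<open>The Levi form near a Levi-flat hypersurface\<close>

lemma DERIV_ge_imp_zero_nearby:
  fixes \<phi> \<phi>' :: "real \<Rightarrow> real"
  assumes "c > 0" "R > 0"
    and der: "\<And>s. \<bar>s\<bar> \<le> R \<Longrightarrow> (\<phi> has_real_derivative \<phi>' s) (at s)"
    and ge: "\<And>s. \<bar>s\<bar> \<le> R \<Longrightarrow> \<phi>' s \<ge> c"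
    and small: "\<bar>\<phi> 0\<bar> < c * R"
  obtains t where "\<bar>t\<bar> \<le> \<bar>\<phi> 0\<bar> / c" "\<phi> t = 0"
proof -
  have cont: "continuous_on {a..b} \<phi>" if "-R \<le> a" "b \<le> R" for a b
    by (rule continuous_at_imp_continuous_on) (use der that in \<open>force intro: DERIV_isCont\<close>)
  define t1 where "t1 = - \<phi> 0 / c"
  have t1: "\<bar>t1\<bar> < R" "\<bar>t1\<bar> = \<bar>\<phi> 0\<bar> / c"
    using small \<open>c > 0\<close> by (auto simp: t1_def abs_minus_commute divide_less_eq mult.commute)
  consider "\<phi> 0 = 0" | "\<phi> 0 < 0" | "\<phi> 0 > 0" by linarith
  then show ?thesis
  proof cases
    case 1
    then show ?thesis using that[of 0] by simp
  next
    case 2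
    then have "0 < t1" using \<open>c > 0\<close> by (simp add: t1_def divide_neg_pos)
    then obtain z where z: "0 < z" "z < t1" "\<phi> t1 - \<phi> 0 = t1 * \<phi>' z"
      using MVT2[of 0 t1 \<phi> \<phi>'] der t1 by force
    have "t1 * c \<le> t1 * \<phi>' z" using ge[of z] z t1(1) \<open>0 < t1\<close> by (intro mult_left_mono) auto
    moreover have "t1 * c = - \<phi> 0" using \<open>c > 0\<close> by (simp add: t1_def)
    ultimately have "\<phi> t1 \<ge> 0" using z by linarith
    then obtain t where "0 \<le> t" "t \<le> t1" "\<phi> t = 0"
      using IVT'[of \<phi> 0 0 t1] 2 \<open>0 < t1\<close> cont[of 0 t1] t1 by force
    then show ?thesis using t1 by (intro that[of t]) auto
  next
    case 3
    then have "t1 < 0" using \<open>c > 0\<close> by (simp add: t1_def)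
    then obtain z where z: "t1 < z" "z < 0" "\<phi> 0 - \<phi> t1 = (0 - t1) * \<phi>' z"
      using MVT2[of t1 0 \<phi> \<phi>'] der t1 by force
    have "(0 - t1) * c \<le> (0 - t1) * \<phi>' z" using ge[of z] z t1 by (intro mult_left_mono) auto
    moreover have "(0 - t1) * c = \<phi> 0" using \<open>c > 0\<close> by (simp add: t1_def)
    ultimately have "\<phi> t1 \<le> 0" using z by linarith
    then obtain t where "t1 \<le> t" "t \<le> 0" "\<phi> t = 0"
      using IVT'[of \<phi> t1 0 0] 3 \<open>t1 < 0\<close> cont[of t1 0] t1 by force
    then show ?thesis using t1 by (intro that[of t]) auto
  qed
qed

lemma has_real_derivative_along_line:
  fixes F :: "'a::real_normed_vector \<Rightarrow> real"
  assumes "(F has_derivative F') (at (q + s *\<^sub>R d))"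
  shows "((\<lambda>s. F (q + s *\<^sub>R d)) has_real_derivative F' d) (at s)"
proof -
  have "((F \<circ> (\<lambda>s. q + s *\<^sub>R d)) has_derivative (F' \<circ> (\<lambda>h. h *\<^sub>R d))) (at s)"
    by (rule diff_chain_at) (auto intro!: derivative_eq_intros assms)
  moreover have "F' \<circ> (\<lambda>h. h *\<^sub>R d) = (*) (F' d)"
    using linear_scale[OF has_derivative_linear[OF assms]] by auto
  ultimately show ?thesis by (simp add: has_field_derivative_def comp_def)
qed

lemma finite_family_bounded_on_compact:
  fixes F :: "'i \<Rightarrow> 'a::metric_space \<Rightarrow> real"
  assumes "compact K" "finite I" "\<And>i. i \<in> I \<Longrightarrow> continuous_on K (F i)"
  shows "\<exists>M. \<forall>i\<in>I. \<forall>x\<in>K. \<bar>F i x\<bar> \<le> M"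
proof -
  define g where "g x = (\<Sum>i\<in>I. \<bar>F i x\<bar>)" for x
  have "continuous_on K g" unfolding g_def using assms(3) by (intro continuous_intros) auto
  then have "compact (g ` K)" using assms(1) by (rule compact_continuous_image)
  then obtain B where B: "\<forall>y\<in>g ` K. \<bar>y\<bar> \<le> B" using compact_imp_bounded bounded_real by blast
  have "\<bar>F i x\<bar> \<le> B" if "i \<in> I" "x \<in> K" for i x
  proof -
    have "\<bar>F i x\<bar> \<le> g x" unfolding g_def using assms(2) that(1) by (intro member_le_sum) auto
    also have "\<dots> \<le> B" using B that(2) by fastforce
    finally show ?thesis .
  qed
  then show ?thesis by blast
qed

context C3_function
begin

lemma transversal_direction_near:
  assumes p: "p \<in> U" "D p v \<noteq> 0"
  obtains d c r where "norm d = 1" "c > 0" "r > 0" "cball p r \<subseteq> U" "\<And>x. x \<in> cball p r \<Longrightarrow> c \<le> D x d"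
proof -
  have "\<exists>e\<in>Basis. D p e \<noteq> 0"
  proof (rule ccontr)
    assume "\<not> (\<exists>e\<in>Basis. D p e \<noteq> 0)"
    then show False
      using linear_expand_complex2[OF linear_D[OF p(1)], of v] p(2) by (simp add: Basis_complex2)
  qed
  then obtain e where e: "e \<in> Basis" "D p e \<noteq> 0" by blast
  define d where "d = sgn (D p e) *\<^sub>R e"
  define c where "c = D p d / 2"
  have "c > 0" using e by (simp add: c_def d_def D_scaleR[OF p(1)] sgn_if)
  have "isCont (\<lambda>x. D x d) p" using continuous_on_D open_U p(1) continuous_on_eq_continuous_at by blast
  then obtain \<delta>1 where "\<delta>1 > 0" and \<delta>1: "\<And>x. dist x p < \<delta>1 \<Longrightarrow> \<bar>D x d - D p d\<bar> < c"
    unfolding continuous_at_eps_delta dist_real_def using \<open>c > 0\<close> by blast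
  obtain \<delta>2 where "\<delta>2 > 0" "ball p \<delta>2 \<subseteq> U" using open_U p(1) open_contains_ball by blast
  define r where "r = min \<delta>1 \<delta>2 / 2"
  show ?thesis
  proof
    show "norm d = 1" using e by (simp add: d_def abs_sgn_eq)
    show "c > 0" "r > 0" using \<open>c > 0\<close> \<open>\<delta>1 > 0\<close> \<open>\<delta>2 > 0\<close> by (simp_all add: r_def)
    show "cball p r \<subseteq> U" using \<open>ball p \<delta>2 \<subseteq> U\<close> \<open>\<delta>2 > 0\<close> by (auto simp: r_def)
    show "c \<le> D x d" if "x \<in> cball p r" for x
    proof -
      have "\<bar>D x d - D p d\<bar> < c"
        using that \<open>\<delta>1 > 0\<close> zero_le_dist[of p x] by (intro \<delta>1) (simp add: r_def dist_commute)
      then show ?thesis unfolding c_def by linarith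
    qed
  qed
qed

lemma zero_along_transversal:
  assumes "norm d = 1" "c > 0" "cball p r \<subseteq> U" and D_ge: "\<And>x. x \<in> cball p r \<Longrightarrow> c \<le> D x d"
    and q: "dist p q < r / 2" "\<bar>\<rho> q\<bar> < c * (r / 2)"
  obtains t where "\<bar>t\<bar> \<le> \<bar>\<rho> q\<bar> / c" "\<rho> (q + t *\<^sub>R d) = 0" "\<And>s. \<bar>s\<bar> \<le> \<bar>t\<bar> \<Longrightarrow> q + s *\<^sub>R d \<in> cball p r"
proof -
  have line: "q + s *\<^sub>R d \<in> cball p r" if "\<bar>s\<bar> \<le> r / 2" for s
  proof -
    have "dist p (q + s *\<^sub>R d) \<le> dist p q + norm (s *\<^sub>R d)"
      using norm_triangle_ineq4[of "p - q" "s *\<^sub>R d"] by (simp add: dist_norm algebra_simps)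
    also have "\<dots> < r" using q that \<open>norm d = 1\<close> by simp
    finally show ?thesis by simp
  qed
  have "r > 0" using q(1) zero_le_dist[of p q] by linarith
  obtain t where t: "\<bar>t\<bar> \<le> \<bar>\<rho> q\<bar> / c" "\<rho> (q + t *\<^sub>R d) = 0"
  proof (rule DERIV_ge_imp_zero_nearby[OF \<open>c > 0\<close>, of "r / 2" "\<lambda>s. \<rho> (q + s *\<^sub>R d)" "\<lambda>s. D (q + s *\<^sub>R d) d"])
    show "((\<lambda>s. \<rho> (q + s *\<^sub>R d)) has_real_derivative D (q + s *\<^sub>R d) d) (at s)" if "\<bar>s\<bar> \<le> r / 2" for s
    proof -
      have "q + s *\<^sub>R d \<in> U" using line[OF that] assms(3) by blast
      then show ?thesis by (rule has_real_derivative_along_line[OF has_derivative_rho])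
    qed
    show "D (q + s *\<^sub>R d) d \<ge> c" if "\<bar>s\<bar> \<le> r / 2" for s
      using D_ge[OF line[OF that]] .
  qed (use \<open>r > 0\<close> q(2) in simp_all)
  moreover have "\<bar>\<rho> q\<bar> / c < r / 2" using q(2) \<open>c > 0\<close> by (simp add: divide_less_eq mult.commute)
  ultimately show ?thesis
  proof (intro that[OF t])
    fix s assume "\<bar>s\<bar> \<le> \<bar>t\<bar>"
    then show "q + s *\<^sub>R d \<in> cball p r" using t(1) \<open>\<bar>\<rho> q\<bar> / c < r / 2\<close> by (intro line) linarith
  qed
qed

text \<open>Each \<open>q\<close> near \<open>p\<close> reaches the zero set of \<open>\<rho>\<close> within distance \<open>\<bar>\<rho> q\<bar> / c\<close> along a
  transversal direction \<open>d\<close>, and \<open>f\<close> is Lipschitz along that segment.\<close>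

lemma Ck_on_1_vanishing_le_rho:
  assumes f: "Ck_on 1 U f" and f0: "\<And>x. x \<in> U \<Longrightarrow> \<rho> x = 0 \<Longrightarrow> f x = 0"
    and p: "p \<in> U" "\<rho> p = 0" "D p v \<noteq> 0"
  obtains r K where "r > 0" "ball p r \<subseteq> U" "\<And>q. q \<in> ball p r \<Longrightarrow> \<bar>f q\<bar> \<le> K * \<bar>\<rho> q\<bar>"
proof -
  obtain d c r1 where d: "norm d = 1" "c > 0" "r1 > 0" "cball p r1 \<subseteq> U" "\<And>x. x \<in> cball p r1 \<Longrightarrow> c \<le> D x d"
    using transversal_direction_near[OF p(1,3)] by blast
  obtain f' where f': "\<And>x. x \<in> U \<Longrightarrow> (f has_derivative f' x) (at x)" "\<And>v. continuous_on U (\<lambda>x. f' x v)"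
    using f unfolding Ck_on_1 by blast
  have "\<exists>M. \<forall>x\<in>cball p r1. \<bar>f' x d\<bar> \<le> M"
    using finite_family_bounded_on_compact[OF compact_cball[of p r1], where I="{d}" and F="\<lambda>v x. f' x v"]
      continuous_on_subset[OF f'(2) d(4)] by auto
  then obtain M where M: "\<And>x. x \<in> cball p r1 \<Longrightarrow> \<bar>f' x d\<bar> \<le> M" by blast
  have "c * (r1 / 2) > 0" using d by simp
  moreover have "isCont \<rho> p" using continuous_on_rho open_U p(1) continuous_on_eq_continuous_at by blast
  ultimately obtain \<delta> where "\<delta> > 0" and \<delta>: "\<And>x. dist x p < \<delta> \<Longrightarrow> \<bar>\<rho> x - \<rho> p\<bar> < c * (r1 / 2)"
    unfolding continuous_at_eps_delta dist_real_def by blast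
  define r where "r = min \<delta> (r1 / 2)"
  show ?thesis
  proof
    show "r > 0" using \<open>\<delta> > 0\<close> d(3) by (simp add: r_def)
    have "r \<le> r1" using d(3) by (simp add: r_def)
    then show "ball p r \<subseteq> U" using subset_ball ball_subset_cball d(4) by blast
    fix q assume q: "q \<in> ball p r"
    have qd: "dist p q < r1 / 2" "\<bar>\<rho> q\<bar> < c * (r1 / 2)"
      using q \<delta>[of q] p(2) by (simp_all add: r_def dist_commute)
    obtain t where t: "\<bar>t\<bar> \<le> \<bar>\<rho> q\<bar> / c" "\<rho> (q + t *\<^sub>R d) = 0"
      and line: "\<And>s. \<bar>s\<bar> \<le> \<bar>t\<bar> \<Longrightarrow> q + s *\<^sub>R d \<in> cball p r1"
      using zero_along_transversal[OF d(1,2,4,5) qd] by blast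
    have "norm (f (q + t *\<^sub>R d) - f (q + 0 *\<^sub>R d)) \<le> M * norm (t - 0)"
    proof (rule field_differentiable_bound[where S="{- \<bar>t\<bar>..\<bar>t\<bar>}" and f="\<lambda>s. f (q + s *\<^sub>R d)"
          and f'="\<lambda>s. f' (q + s *\<^sub>R d) d"])
      fix s assume "s \<in> {- \<bar>t\<bar>..\<bar>t\<bar>}"
      then have "q + s *\<^sub>R d \<in> cball p r1" by (intro line) auto
      then have "q + s *\<^sub>R d \<in> U" using d(4) by blast
      then show "((\<lambda>s. f (q + s *\<^sub>R d)) has_field_derivative f' (q + s *\<^sub>R d) d) (at s within {- \<bar>t\<bar>..\<bar>t\<bar>})"
        by (rule has_field_derivative_at_within[OF has_real_derivative_along_line[OF f'(1)]])
      show "norm (f' (q + s *\<^sub>R d) d) \<le> M" using M[OF \<open>q + s *\<^sub>R d \<in> cball p r1\<close>] by simp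
    qed auto
    moreover have "f (q + t *\<^sub>R d) = 0" using f0 t(2) line[of t] d(4) by blast
    ultimately have "\<bar>f q\<bar> \<le> M * \<bar>t\<bar>" by simp
    also have "\<dots> \<le> M * (\<bar>\<rho> q\<bar> / c)"
    proof (rule mult_left_mono[OF t(1)])
      have "p \<in> cball p r1" using d(3) by simp
      then show "0 \<le> M" using M abs_ge_zero[of "f' p d"] by fastforce
    qed
    finally show "\<bar>f q\<bar> \<le> M / c * \<bar>\<rho> q\<bar>" by simp
  qed
qed

end

text \<open>\<open>cgrad D x\<close> is the complex gradient \<open>(2 \<partial>\<rho>/\<partial>(conj z\<^sub>j))\<^sub>j\<close>, and \<open>ctangent D x\<close> spans the
  complex tangent line of the level set of \<open>\<rho>\<close> through \<open>x\<close>.\<close>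

definition cgrad :: "(complex^2 \<Rightarrow> complex^2 \<Rightarrow> real) \<Rightarrow> complex^2 \<Rightarrow> complex^2" where
  "cgrad D x = (\<chi> j. of_real (D x (axis j 1)) + \<i> * of_real (D x (axis j \<i>)))"

definition ctangent :: "(complex^2 \<Rightarrow> complex^2 \<Rightarrow> real) \<Rightarrow> complex^2 \<Rightarrow> complex^2" where
  "ctangent D x = (\<chi> j. if j = 1 then - cnj (cgrad D x $ 2) else cnj (cgrad D x $ 1))"

definition levi_polar :: "(complex^2 \<Rightarrow> complex^2 \<Rightarrow> complex^2 \<Rightarrow> real) \<Rightarrow> complex^2 \<Rightarrow> complex^2 \<Rightarrow> complex^2 \<Rightarrow> real" where
  "levi_polar H x a b = H x a b + H x (\<i> *s a) (\<i> *s b)"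

definition norm1 :: "complex^2 \<Rightarrow> real" where
  "norm1 v = cmod (v$1) + cmod (v$2)"

lemma ctangent_components:
  "Re (ctangent D x $ 1) = - D x (axis 2 1)" "Im (ctangent D x $ 1) = D x (axis 2 \<i>)"
  "Re (ctangent D x $ 2) = D x (axis 1 1)" "Im (ctangent D x $ 2) = - D x (axis 1 \<i>)"
  by (simp_all add: ctangent_def cgrad_def)

lemma norm1_nonneg: "norm1 v \<ge> 0"
  by (simp add: norm1_def)

lemma norm1_scale: "norm1 (c *s v) = cmod c * norm1 v"
  by (simp add: norm1_def norm_mult algebra_simps)

lemma cmod_le_norm1: "cmod (v$j) \<le> norm1 v"
  using exhaust_2[of j] by (auto simp: norm1_def)

lemma abs_linear_le_norm1:
  fixes L :: "complex^2 \<Rightarrow> real"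
  assumes "linear L" "\<And>e. e \<in> Basis \<Longrightarrow> \<bar>L e\<bar> \<le> K"
  shows "\<bar>L w\<bar> \<le> 4 * K * norm1 w"
proof -
  have c: "\<bar>Re (w$j)\<bar> \<le> norm1 w" "\<bar>Im (w$j)\<bar> \<le> norm1 w" for j
    using abs_Re_le_cmod[of "w$j"] abs_Im_le_cmod[of "w$j"] cmod_le_norm1[of w j] by linarith+
  have k: "\<bar>L (axis 1 1)\<bar> \<le> K" "\<bar>L (axis 1 \<i>)\<bar> \<le> K" "\<bar>L (axis 2 1)\<bar> \<le> K" "\<bar>L (axis 2 \<i>)\<bar> \<le> K"
    using assms(2) by (auto simp: Basis_complex2)
  have t: "\<bar>a * b\<bar> \<le> norm1 w * K" if "\<bar>a\<bar> \<le> norm1 w" "\<bar>b\<bar> \<le> K" for a b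
    using that by (simp add: abs_mult mult_mono' norm1_nonneg)
  have "\<bar>L w\<bar> \<le> \<bar>Re (w$1) * L (axis 1 1)\<bar> + \<bar>Im (w$1) * L (axis 1 \<i>)\<bar>
      + \<bar>Re (w$2) * L (axis 2 1)\<bar> + \<bar>Im (w$2) * L (axis 2 \<i>)\<bar>"
    using linear_expand_complex2[OF assms(1), of w] by simp
  also have "\<dots> \<le> 4 * K * norm1 w"
    using t[OF c(1)[of 1] k(1)] t[OF c(2)[of 1] k(2)] t[OF c(1)[of 2] k(3)] t[OF c(2)[of 2] k(4)]
      mult.commute[of K "norm1 w"] by linarith
  finally show ?thesis .
qed

lemma cmod_complex_of_real_add_ii: "cmod (complex_of_real a + \<i> * complex_of_real b) \<le> \<bar>a\<bar> + \<bar>b\<bar>"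
  using norm_triangle_ineq[of "complex_of_real a" "\<i> * complex_of_real b"] by (simp add: norm_mult)

lemma cmod_complex_of_real_diff_ii: "cmod (complex_of_real a - \<i> * complex_of_real b) \<le> \<bar>a\<bar> + \<bar>b\<bar>"
  using norm_triangle_ineq4[of "complex_of_real a" "\<i> * complex_of_real b"] by (simp add: norm_mult)

lemma decompose_conj_orthogonal:
  fixes n1 n2 w1 w2 :: complex
  assumes "N = (cmod n1)\<^sup>2 + (cmod n2)\<^sup>2" "N \<noteq> 0"
  defines "s \<equiv> (- w1 * n2 + w2 * n1) / of_real N"
  defines "r \<equiv> (w1 * cnj n1 + w2 * cnj n2) / of_real N"
  shows "s * (- cnj n2) + r * n1 = w1" "s * cnj n1 + r * n2 = w2"
proof -
  have NN: "complex_of_real N = n1 * cnj n1 + n2 * cnj n2"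
    using assms(1) by (simp add: complex_mult_cnj cmod_power2)
  have N0: "complex_of_real N \<noteq> 0" using assms(2) by simp
  show "s * (- cnj n2) + r * n1 = w1"
    using N0 unfolding s_def r_def by (simp add: field_simps) (simp add: NN algebra_simps)
  show "s * cnj n1 + r * n2 = w2"
    using N0 unfolding s_def r_def by (simp add: field_simps) (simp add: NN algebra_simps)
qed

context C3_function
begin

lemma ctangent_complex_tangent:
  assumes "x \<in> U"
  shows "D x (ctangent D x) = 0" "D x (\<i> *s ctangent D x) = 0"
proof -
  have "(\<Sum>j\<in>UNIV. (complex_of_real (D x (axis j 1)) - \<i> * complex_of_real (D x (axis j \<i>))) * ctangent D x $ j) = 0"
    by (simp add: sum_2 ctangent_def cgrad_def algebra_simps)
  then have "complex_of_real (D x (ctangent D x)) - \<i> * complex_of_real (D x (\<i> *s ctangent D x)) = 0"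
    by (simp add: sum_axis_complexify[OF linear_of_real_D[OF assms]])
  then show "D x (ctangent D x) = 0" "D x (\<i> *s ctangent D x) = 0"
    by (simp_all add: complex_eq_iff)
qed

lemma levi_flat_imp_levi_quad_ctangent_eq_0:
  "levi_flat U \<rho> \<Longrightarrow> x \<in> U \<Longrightarrow> \<rho> x = 0 \<Longrightarrow> levi_quad H x (ctangent D x) = 0"
  using levi_flat_imp_levi_quad_eq_0 ctangent_complex_tangent by blast

lemma Ck_on_1_H_comp:
  assumes a: "\<And>j. Ck_on 1 U (\<lambda>x. Re (a x $ j))" "\<And>j. Ck_on 1 U (\<lambda>x. Im (a x $ j))"
    and b: "\<And>j. Ck_on 1 U (\<lambda>x. Re (b x $ j))" "\<And>j. Ck_on 1 U (\<lambda>x. Im (b x $ j))"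
  shows "Ck_on 1 U (\<lambda>x. H x (a x) (b x))"
proof -
  have Hb: "Ck_on 1 U (\<lambda>x. H x e (b x))" for e
  proof (rule Ck_on_1_cong[OF open_U])
    show "Re (b x $ 1) * H x e (axis 1 1) + Im (b x $ 1) * H x e (axis 1 \<i>)
        + Re (b x $ 2) * H x e (axis 2 1) + Im (b x $ 2) * H x e (axis 2 \<i>) = H x e (b x)" if "x \<in> U" for x
      using linear_expand_complex2[OF linear_H[OF that, of e], of "b x"] by simp
  qed (intro Ck_on_1_add Ck_on_1_mult Ck_on_1_H b)
  show ?thesis
  proof (rule Ck_on_1_cong[OF open_U])
    show "Re (a x $ 1) * H x (axis 1 1) (b x) + Im (a x $ 1) * H x (axis 1 \<i>) (b x)
        + Re (a x $ 2) * H x (axis 2 1) (b x) + Im (a x $ 2) * H x (axis 2 \<i>) (b x) = H x (a x) (b x)"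
      if "x \<in> U" for x
      using linear_expand_complex2[OF linear_H_left[OF that], of "a x"] by simp
  qed (intro Ck_on_1_add Ck_on_1_mult Hb a)
qed

lemma Ck_on_1_levi_quad_ctangent: "Ck_on 1 U (\<lambda>x. levi_quad H x (ctangent D x))"
proof -
  have "Ck_on 1 U (\<lambda>x. Re (ctangent D x $ j)) \<and> Ck_on 1 U (\<lambda>x. Im (ctangent D x $ j))" for j
    using exhaust_2[of j] Ck_on_1_D Ck_on_1_minus[OF Ck_on_1_D]
    by (auto simp only: ctangent_components)
  then show ?thesis
    unfolding levi_quad_def
    by (intro Ck_on_1_add Ck_on_1_H_comp) (simp_all only: vector_smult_component Re_i_times Im_i_times Ck_on_1_minus)
qed

lemma levi_quad_add:
  "x \<in> U \<Longrightarrow> levi_quad H x (a + b) = levi_quad H x a + levi_quad H x b + levi_polar H x a b + levi_polar H x b a"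
  by (simp add: levi_quad_def levi_polar_def vector_add_ldistrib H_add_left H_add_right)

lemma levi_quad_scale:
  assumes "x \<in> U"
  shows "levi_quad H x (s *s v) = (cmod s)\<^sup>2 * levi_quad H x v"
proof -
  have comb: "H x (a *\<^sub>R u + b *\<^sub>R u') (c *\<^sub>R u + d *\<^sub>R u')
      = a*c*H x u u + a*d*H x u u' + b*c*H x u' u + b*d*H x u' u'" for a b c d u u'
    by (simp add: H_add_left[OF assms] H_add_right[OF assms] H_scaleR_left[OF assms]
                  H_scaleR_right[OF assms] algebra_simps)
  have "s *s v = Re s *\<^sub>R v + Im s *\<^sub>R (\<i> *s v)"
    by (simp add: vec_eq_iff forall_2 complex_eq_iff)
  then have 1: "H x (s *s v) (s *s v) = Re s * Re s * H x v v + Re s * Im s * H x v (\<i> *s v)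
      + Im s * Re s * H x (\<i> *s v) v + Im s * Im s * H x (\<i> *s v) (\<i> *s v)"
    by (simp only: comb)
  have "\<i> *s (s *s v) = Re s *\<^sub>R (\<i> *s v) + (- Im s) *\<^sub>R v"
    by (simp add: vec_eq_iff forall_2 complex_eq_iff)
  then have 2: "H x (\<i> *s (s *s v)) (\<i> *s (s *s v)) = Re s * Re s * H x (\<i> *s v) (\<i> *s v)
      + Re s * (- Im s) * H x (\<i> *s v) v + (- Im s) * Re s * H x v (\<i> *s v) + (- Im s) * (- Im s) * H x v v"
    by (simp only: comb)
  show ?thesis
    unfolding levi_quad_def 1 2 by (simp only: cmod_power2) (simp add: algebra_simps power2_eq_square)
qed

lemma abs_H_le_norm1:
  assumes "x \<in> U" "\<And>e e'. e \<in> Basis \<Longrightarrow> e' \<in> Basis \<Longrightarrow> \<bar>H x e e'\<bar> \<le> K"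
  shows "\<bar>H x a b\<bar> \<le> 16 * K * norm1 a * norm1 b"
proof -
  have "\<bar>H x e b\<bar> \<le> 4 * K * norm1 b" if "e \<in> Basis" for e
    using abs_linear_le_norm1[OF linear_H[OF assms(1)]] assms(2) that by blast
  then have "\<bar>H x a b\<bar> \<le> 4 * (4 * K * norm1 b) * norm1 a"
    by (rule abs_linear_le_norm1[OF linear_H_left[OF assms(1)]])
  then show ?thesis by (simp add: algebra_simps)
qed

lemma abs_levi_polar_le_norm1:
  assumes "x \<in> U" "\<And>e e'. e \<in> Basis \<Longrightarrow> e' \<in> Basis \<Longrightarrow> \<bar>H x e e'\<bar> \<le> K"
  shows "\<bar>levi_polar H x a b\<bar> \<le> 32 * K * norm1 a * norm1 b"
  using abs_H_le_norm1[OF assms, of a b] abs_H_le_norm1[OF assms, of "\<i> *s a" "\<i> *s b"]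
  by (simp add: levi_polar_def norm1_scale)

end

lemma norm1_ctangent: "norm1 (ctangent D x) = norm1 (cgrad D x)"
  by (simp add: norm1_def ctangent_def)

lemma cmod_cgrad_le:
  assumes "\<And>e. e \<in> Basis \<Longrightarrow> \<bar>D x e\<bar> \<le> K"
  shows "cmod (cgrad D x $ j) \<le> 2 * K"
proof -
  have "\<bar>D x (axis j 1)\<bar> \<le> K" "\<bar>D x (axis j \<i>)\<bar> \<le> K"
    by (simp_all add: assms Basis_complex_def)
  moreover have "cmod (cgrad D x $ j) \<le> \<bar>D x (axis j 1)\<bar> + \<bar>D x (axis j \<i>)\<bar>"
    using cmod_complex_of_real_add_ii by (simp add: cgrad_def)
  ultimately show ?thesis by linarith
qed

lemma norm1_cgrad_le:
  "(\<And>e. e \<in> Basis \<Longrightarrow> \<bar>D x e\<bar> \<le> K) \<Longrightarrow> norm1 (cgrad D x) \<le> 4 * K"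
  using cmod_cgrad_le[of D x K 1] cmod_cgrad_le[of D x K 2] by (simp add: norm1_def)

lemma norm_cgrad_squared: "(norm (cgrad D x))\<^sup>2 = (cmod (cgrad D x $ 1))\<^sup>2 + (cmod (cgrad D x $ 2))\<^sup>2"
  by (simp add: norm_vec_def L2_set_def sum_2)

context C3_function
begin

lemma neg_levi_quad_decomposition_le:
  assumes "x \<in> U" "\<And>e e'. e \<in> Basis \<Longrightarrow> e' \<in> Basis \<Longrightarrow> \<bar>H x e e'\<bar> \<le> K"
  shows "- levi_quad H x (s *s a + r *s b) \<le> (cmod s)\<^sup>2 * \<bar>levi_quad H x a\<bar>
           + 64 * K * (cmod s * norm1 a) * (cmod r * norm1 b) + 32 * K * (cmod r * norm1 b)\<^sup>2"
proof -
  have "- ((cmod s)\<^sup>2 * levi_quad H x a) \<le> (cmod s)\<^sup>2 * \<bar>levi_quad H x a\<bar>"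
    using mult_left_mono[OF abs_ge_minus_self[of "levi_quad H x a"] zero_le_power2[of "cmod s"]] by simp
  moreover have "- levi_polar H x (s *s a) (r *s b) \<le> 32 * K * (cmod s * norm1 a) * (cmod r * norm1 b)"
    "- levi_polar H x (r *s b) (s *s a) \<le> 32 * K * (cmod s * norm1 a) * (cmod r * norm1 b)"
    "- levi_polar H x (r *s b) (r *s b) \<le> 32 * K * (cmod r * norm1 b)\<^sup>2"
    using abs_levi_polar_le_norm1[OF assms, of "s *s a" "r *s b"]
      abs_levi_polar_le_norm1[OF assms, of "r *s b" "s *s a"]
      abs_levi_polar_le_norm1[OF assms, of "r *s b" "r *s b"]
    by (simp_all add: norm1_scale power2_eq_square algebra_simps)
  moreover have "levi_quad H x (r *s b) = levi_polar H x (r *s b) (r *s b)"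
    by (simp add: levi_quad_def levi_polar_def)
  ultimately show ?thesis
    by (simp add: levi_quad_add[OF assms(1)] levi_quad_scale[OF assms(1)])
qed

lemma cgrad_ctangent_decomposition:
  assumes x: "x \<in> U" and "c > 0" "c \<le> norm (cgrad D x)"
    and K: "\<And>e. e \<in> Basis \<Longrightarrow> \<bar>D x e\<bar> \<le> K"
  obtains s r where "w = s *s ctangent D x + r *s cgrad D x"
    "cmod s \<le> 2 * K * norm1 w / c\<^sup>2" "cmod r \<le> (\<bar>D x w\<bar> + \<bar>D x (\<i> *s w)\<bar>) / c\<^sup>2"
proof -
  define n1 n2 where "n1 = cgrad D x $ 1" and "n2 = cgrad D x $ 2"
  define N where "N = (cmod n1)\<^sup>2 + (cmod n2)\<^sup>2"
  have "c\<^sup>2 \<le> N"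
    using power_mono[OF assms(3), of 2] \<open>c > 0\<close> norm_cgrad_squared[of D x] by (simp add: N_def n1_def n2_def)
  moreover have "0 < c\<^sup>2" using \<open>c > 0\<close> by simp
  ultimately have "N > 0" by linarith
  define s where "s = (- (w$1) * n2 + (w$2) * n1) / of_real N"
  define r where "r = ((w$1) * cnj n1 + (w$2) * cnj n2) / of_real N"
  show ?thesis
  proof
    show "w = s *s ctangent D x + r *s cgrad D x"
      using decompose_conj_orthogonal[OF N_def, of "w$1" "w$2"] \<open>N > 0\<close>
      by (simp add: vec_eq_iff forall_2 ctangent_def n1_def[symmetric] n2_def[symmetric] s_def r_def)
    have "cmod n1 \<le> 2 * K" "cmod n2 \<le> 2 * K"
      using cmod_cgrad_le[where D=D and x=x, OF K] by (simp_all add: n1_def n2_def)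
    then have "cmod s * N \<le> 2 * K * norm1 w"
      using \<open>N > 0\<close> norm_triangle_ineq[of "- (w$1) * n2" "(w$2) * n1"]
        mult_left_mono[of "cmod n2" "2 * K" "cmod (w$1)"] mult_left_mono[of "cmod n1" "2 * K" "cmod (w$2)"]
      by (simp add: s_def norm_divide norm_mult norm1_def algebra_simps)
    then show "cmod s \<le> 2 * K * norm1 w / c\<^sup>2"
      using \<open>c\<^sup>2 \<le> N\<close> \<open>c > 0\<close> mult_left_mono[OF \<open>c\<^sup>2 \<le> N\<close> norm_ge_zero[of s]]
      by (simp add: pos_le_divide_eq)
    have "(w$1) * cnj n1 + (w$2) * cnj n2 = complex_of_real (D x w) - \<i> * complex_of_real (D x (\<i> *s w))"
      using sum_axis_complexify[OF linear_of_real_D[OF x], of w]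
      by (simp add: sum_2 n1_def n2_def cgrad_def algebra_simps)
    then have "cmod r * N \<le> \<bar>D x w\<bar> + \<bar>D x (\<i> *s w)\<bar>"
      using \<open>N > 0\<close> cmod_complex_of_real_diff_ii by (simp add: r_def norm_divide)
    then show "cmod r \<le> (\<bar>D x w\<bar> + \<bar>D x (\<i> *s w)\<bar>) / c\<^sup>2"
      using \<open>c\<^sup>2 \<le> N\<close> \<open>c > 0\<close> mult_left_mono[OF \<open>c\<^sup>2 \<le> N\<close> norm_ge_zero[of r]]
      by (simp add: pos_le_divide_eq)
  qed
qed

end

context C3_function
begin

lemma neg_levi_quad_le_at:
  assumes x: "x \<in> U" and c: "c > 0" "c \<le> norm (cgrad D x)"
    and K1: "\<And>e. e \<in> Basis \<Longrightarrow> \<bar>D x e\<bar> \<le> K1"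
    and K2: "\<And>e e'. e \<in> Basis \<Longrightarrow> e' \<in> Basis \<Longrightarrow> \<bar>H x e e'\<bar> \<le> K2"
  shows "- levi_quad H x w \<le> 4 * K1\<^sup>2 / c ^ 4 * \<bar>levi_quad H x (ctangent D x)\<bar> * (norm1 w)\<^sup>2
           + 6144 * K1 ^ 3 * K2 / c ^ 4 * (\<bar>D x w\<bar> + \<bar>D x (\<i> *s w)\<bar>) * norm1 w"
proof -
  define W G F n where "W = norm1 w" and "G = \<bar>D x w\<bar> + \<bar>D x (\<i> *s w)\<bar>"
    and "F = \<bar>levi_quad H x (ctangent D x)\<bar>" and "n = norm1 (cgrad D x)"
  obtain s r where w: "w = s *s ctangent D x + r *s cgrad D x"
    and s: "cmod s \<le> 2 * K1 * W / c\<^sup>2" and r: "cmod r \<le> G / c\<^sup>2"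
    using cgrad_ctangent_decomposition[OF x c K1] unfolding W_def G_def .
  have "axis 1 1 \<in> (Basis :: (complex^2) set)" by (simp add: Basis_complex2)
  then have "K1 \<ge> 0" "K2 \<ge> 0" using K1 K2 by (meson abs_ge_zero order_trans)+
  have nonneg: "W \<ge> 0" "G \<ge> 0" "F \<ge> 0" "n \<ge> 0" "c\<^sup>2 > 0"
    using norm1_nonneg c by (simp_all add: W_def G_def F_def n_def)
  have n: "n \<le> 4 * K1" using norm1_cgrad_le[where D=D and x=x, OF K1] by (simp add: n_def)
  have G: "G \<le> 8 * K1 * W"
    using abs_linear_le_norm1[OF linear_D[OF x] K1, of w] abs_linear_le_norm1[OF linear_D[OF x] K1, of "\<i> *s w"]
    by (simp add: G_def W_def norm1_scale)
  have sn: "cmod s * n \<le> (2 * K1 * W / c\<^sup>2) * (4 * K1)"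
    using s n nonneg by (intro mult_mono) auto
  have rn: "cmod r * n \<le> (G / c\<^sup>2) * (4 * K1)"
    using r n nonneg by (intro mult_mono) auto
  also have "\<dots> \<le> (8 * K1 * W / c\<^sup>2) * (4 * K1)"
    using G nonneg \<open>K1 \<ge> 0\<close> by (intro mult_right_mono divide_right_mono) auto
  finally have rn': "cmod r * n \<le> (8 * K1 * W / c\<^sup>2) * (4 * K1)" .
  have "- levi_quad H x w \<le> (cmod s)\<^sup>2 * F + 64 * K2 * (cmod s * n) * (cmod r * n) + 32 * K2 * (cmod r * n)\<^sup>2"
    using neg_levi_quad_decomposition_le[OF x K2, of s "ctangent D x" r "cgrad D x"]
    by (simp add: w F_def n_def norm1_ctangent)
  also have "\<dots> \<le> (2 * K1 * W / c\<^sup>2)\<^sup>2 * F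
      + 64 * K2 * ((2 * K1 * W / c\<^sup>2 * (4 * K1)) * (G / c\<^sup>2 * (4 * K1)))
      + 32 * K2 * ((G / c\<^sup>2 * (4 * K1)) * (8 * K1 * W / c\<^sup>2 * (4 * K1)))"
  proof -
    have "(cmod s)\<^sup>2 * F \<le> (2 * K1 * W / c\<^sup>2)\<^sup>2 * F"
      using s nonneg by (intro mult_right_mono power_mono) auto
    moreover have "(cmod s * n) * (cmod r * n) \<le> (2 * K1 * W / c\<^sup>2 * (4 * K1)) * (G / c\<^sup>2 * (4 * K1))"
      using nonneg \<open>K1 \<ge> 0\<close> by (intro mult_mono[OF sn rn]) auto
    then have "64 * K2 * ((cmod s * n) * (cmod r * n))
        \<le> 64 * K2 * ((2 * K1 * W / c\<^sup>2 * (4 * K1)) * (G / c\<^sup>2 * (4 * K1)))"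
      using \<open>K2 \<ge> 0\<close> by (intro mult_left_mono) auto
    then have "64 * K2 * (cmod s * n) * (cmod r * n)
        \<le> 64 * K2 * ((2 * K1 * W / c\<^sup>2 * (4 * K1)) * (G / c\<^sup>2 * (4 * K1)))"
      by (simp only: mult.assoc)
    moreover have "(cmod r * n)\<^sup>2 \<le> (G / c\<^sup>2 * (4 * K1)) * (8 * K1 * W / c\<^sup>2 * (4 * K1))"
      unfolding power2_eq_square[of "cmod r * n"] using nonneg \<open>K1 \<ge> 0\<close> by (intro mult_mono[OF rn rn']) auto
    then have "32 * K2 * (cmod r * n)\<^sup>2
        \<le> 32 * K2 * ((G / c\<^sup>2 * (4 * K1)) * (8 * K1 * W / c\<^sup>2 * (4 * K1)))"
      using \<open>K2 \<ge> 0\<close> by (intro mult_left_mono) auto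
    ultimately show ?thesis by linarith
  qed
  also have "\<dots> = 4 * K1\<^sup>2 / c ^ 4 * F * W\<^sup>2 + 6144 * K1 ^ 3 * K2 / c ^ 4 * G * W"
    using c by (simp add: power2_eq_square eval_nat_numeral field_simps)
  finally show ?thesis by (simp add: W_def G_def F_def mult.commute mult.left_commute)
qed

lemma cgrad_nonzero: "x \<in> U \<Longrightarrow> D x v \<noteq> 0 \<Longrightarrow> cgrad D x \<noteq> 0"
proof
  assume "x \<in> U" "D x v \<noteq> 0" "cgrad D x = 0"
  then have "D x (axis j 1) = 0 \<and> D x (axis j \<i>) = 0" for j
    by (simp add: cgrad_def vec_eq_iff complex_eq_iff)
  then show False
    using linear_expand_complex2[OF linear_D[OF \<open>x \<in> U\<close>], of v] \<open>D x v \<noteq> 0\<close> by simp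
qed

lemma derivative_bounds_on_cball:
  assumes "cball p r \<subseteq> U"
  obtains K1 K2 where "\<And>e x. e \<in> Basis \<Longrightarrow> x \<in> cball p r \<Longrightarrow> \<bar>D x e\<bar> \<le> K1"
    "\<And>e e' x. e \<in> Basis \<Longrightarrow> e' \<in> Basis \<Longrightarrow> x \<in> cball p r \<Longrightarrow> \<bar>H x e e'\<bar> \<le> K2"
proof -
  have "\<exists>K1. \<forall>e\<in>Basis. \<forall>x\<in>cball p r. \<bar>D x e\<bar> \<le> K1"
    using finite_family_bounded_on_compact[OF compact_cball, where I=Basis and F="\<lambda>e x. D x e"]
      continuous_on_subset[OF continuous_on_D assms] by auto
  moreover have "\<exists>K2. \<forall>ee\<in>Basis \<times> Basis. \<forall>x\<in>cball p r. \<bar>H x (fst ee) (snd ee)\<bar> \<le> K2"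
    using finite_family_bounded_on_compact[OF compact_cball, where I="Basis \<times> Basis" and F="\<lambda>ee x. H x (fst ee) (snd ee)"]
      continuous_on_subset[OF continuous_on_H assms] by auto
  ultimately show ?thesis using that by fastforce
qed

lemma neg_levi_quad_le:
  assumes "levi_flat U \<rho>" "p \<in> U" "\<rho> p = 0" "D p v \<noteq> 0"
  obtains r Kf Kg where "r > 0" "ball p r \<subseteq> U"
    "\<And>q w. q \<in> ball p r \<Longrightarrow>
       - levi_quad H q w \<le> Kf * \<bar>\<rho> q\<bar> * (norm1 w)\<^sup>2 + Kg * (\<bar>D q w\<bar> + \<bar>D q (\<i> *s w)\<bar>) * norm1 w"
proof -
  obtain r0 K0 where "r0 > 0" and r0: "ball p r0 \<subseteq> U"
    and K0: "\<And>q. q \<in> ball p r0 \<Longrightarrow> \<bar>levi_quad H q (ctangent D q)\<bar> \<le> K0 * \<bar>\<rho> q\<bar>"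
    using Ck_on_1_vanishing_le_rho[OF Ck_on_1_levi_quad_ctangent _ assms(2-4)]
      levi_flat_imp_levi_quad_ctangent_eq_0[OF assms(1)] by metis
  have "cgrad D p \<noteq> 0" using cgrad_nonzero[OF assms(2,4)] .
  define c where "c = norm (cgrad D p) / 2"
  have "c > 0" using \<open>cgrad D p \<noteq> 0\<close> by (simp add: c_def)
  have "continuous_on U (cgrad D)"
    unfolding cgrad_def by (intro continuous_on_vec_lambda continuous_intros continuous_on_D)
  then have "isCont (\<lambda>x. norm (cgrad D x)) p"
    using continuous_on_eq_continuous_at[OF open_U] assms(2) continuous_norm by blast
  then obtain r1 where "r1 > 0" and r1: "\<And>x. dist x p < r1 \<Longrightarrow> \<bar>norm (cgrad D x) - norm (cgrad D p)\<bar> < c"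
    unfolding continuous_at_eps_delta dist_real_def using \<open>c > 0\<close> by blast
  define r where "r = min r0 r1 / 2"
  have "r > 0" using \<open>r0 > 0\<close> \<open>r1 > 0\<close> by (simp add: r_def)
  have "cball p r \<subseteq> ball p r0" using \<open>r0 > 0\<close> \<open>r1 > 0\<close> by (auto simp: r_def)
  then have cball_U: "cball p r \<subseteq> U" using r0 by blast
  obtain K1 K2 where K1: "\<And>e x. e \<in> Basis \<Longrightarrow> x \<in> cball p r \<Longrightarrow> \<bar>D x e\<bar> \<le> K1"
    and K2: "\<And>e e' x. e \<in> Basis \<Longrightarrow> e' \<in> Basis \<Longrightarrow> x \<in> cball p r \<Longrightarrow> \<bar>H x e e'\<bar> \<le> K2"
    using derivative_bounds_on_cball[OF cball_U] by metis
  show ?thesis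
  proof
    show "r > 0" "ball p r \<subseteq> U" using \<open>r > 0\<close> cball_U by auto
    fix q w assume q: "q \<in> ball p r"
    then have "q \<in> cball p r" by simp
    then have "q \<in> ball p r0" "q \<in> U" using \<open>cball p r \<subseteq> ball p r0\<close> cball_U by blast+
    have "dist p q < r" "r \<le> r1" using q \<open>r1 > 0\<close> by (simp_all add: r_def)
    then have "dist q p < r1" by (simp add: dist_commute)
    then have "\<bar>norm (cgrad D q) - norm (cgrad D p)\<bar> < c" by (rule r1)
    then have "c \<le> norm (cgrad D q)" unfolding c_def by linarith
    from neg_levi_quad_le_at[OF \<open>q \<in> U\<close> \<open>c > 0\<close> this K1[OF _ \<open>q \<in> cball p r\<close>] K2[OF _ _ \<open>q \<in> cball p r\<close>]]
    have "- levi_quad H q w \<le> 4 * K1\<^sup>2 / c ^ 4 * \<bar>levi_quad H q (ctangent D q)\<bar> * (norm1 w)\<^sup>2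
           + 6144 * K1 ^ 3 * K2 / c ^ 4 * (\<bar>D q w\<bar> + \<bar>D q (\<i> *s w)\<bar>) * norm1 w" .
    also have "\<dots> \<le> 4 * K1\<^sup>2 / c ^ 4 * (K0 * \<bar>\<rho> q\<bar>) * (norm1 w)\<^sup>2
           + 6144 * K1 ^ 3 * K2 / c ^ 4 * (\<bar>D q w\<bar> + \<bar>D q (\<i> *s w)\<bar>) * norm1 w"
      using K0[OF \<open>q \<in> ball p r0\<close>] by (intro add_right_mono mult_right_mono mult_left_mono) auto
    finally show "- levi_quad H q w \<le> (4 * K1\<^sup>2 / c ^ 4 * K0) * \<bar>\<rho> q\<bar> * (norm1 w)\<^sup>2
           + (6144 * K1 ^ 3 * K2 / c ^ 4) * (\<bar>D q w\<bar> + \<bar>D q (\<i> *s w)\<bar>) * norm1 w"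
      by (simp add: mult.assoc)
  qed
qed

end

section \<open>Holomorphic discs\<close>

lemma has_vector_derivative_vec:
  fixes f :: "real \<Rightarrow> 'a::euclidean_space ^ 'n"
  assumes "\<And>j. ((\<lambda>t. f t $ j) has_vector_derivative f' $ j) (at t)"
  shows "(f has_vector_derivative f') (at t)"
  unfolding has_vector_derivative_def
proof (subst has_derivative_componentwise_within, intro ballI)
  fix i :: "'a ^ 'n" assume "i \<in> Basis"
  then obtain j u where ju: "i = axis j u" "u \<in> Basis" by (auto simp: Basis_vec_def)
  have "((\<lambda>t. inner (f t $ j) u) has_derivative (\<lambda>h. inner (h *\<^sub>R f' $ j) u)) (at t)"
    using bounded_linear.has_derivative[OF bounded_linear_inner_left assms[of j, unfolded has_vector_derivative_def]] .
  then show "((\<lambda>x. f x \<bullet> i) has_derivative (\<lambda>x. (x *\<^sub>R f') \<bullet> i)) (at t)"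
    by (simp add: ju inner_axis)
qed

lemma has_vector_derivative_along_real_line:
  fixes \<Phi> :: "complex \<Rightarrow> complex"
  assumes "(\<Phi> has_field_derivative \<Phi>') (at (z + of_real t * e))"
  shows "((\<lambda>s. \<Phi> (z + of_real s * e)) has_vector_derivative (e * \<Phi>')) (at t)"
proof -
  have "((\<lambda>s. z + of_real s * e) has_vector_derivative e) (at t)"
    by (auto intro!: derivative_eq_intros simp: has_vector_derivative_def scaleR_conv_of_real)
  from field_vector_diff_chain_within[OF this, of \<Phi> \<Phi>'] assms
  show ?thesis by (simp add: o_def has_field_derivative_at_within)
qed

lemma norm_vector_smult_complex: "norm (c *s (v :: complex ^ 'n)) = cmod c * norm v"
  by (simp add: norm_vec_def L2_set_right_distrib norm_mult)

lemma bounded_linear_vector_smult_right: "bounded_linear (\<lambda>w :: complex ^ 'n. c *s w)"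
proof -
  have "linear (\<lambda>w :: complex ^ 'n. c *s w)"
    by (rule linearI) (simp_all add: vec_eq_iff scaleR_conv_of_real algebra_simps)
  then show ?thesis using linear_conv_bounded_linear by blast
qed

lemma bounded_linear_vector_smult_left: "bounded_linear (\<lambda>h :: complex. h *s (v :: complex ^ 'n))"
proof -
  have "linear (\<lambda>h :: complex. h *s v)"
  proof (rule linearI)
    show "(a + b) *s v = a *s v + b *s v" for a b by (simp add: vec_eq_iff algebra_simps)
    show "(r *\<^sub>R b) *s v = r *\<^sub>R (b *s v)" for r b
      by (simp only: vec_eq_iff vector_smult_component vector_scaleR_component) (simp add: scaleR_conv_of_real)
  qed
  then show ?thesis using linear_conv_bounded_linear by blast
qed

lemma holo_map_on_line_holomorphic:
  assumes "holo_map_on Dh g" "open S" "\<And>z. z \<in> S \<Longrightarrow> y + z *s v \<in> Dh"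
  shows "(\<lambda>\<mu>. g (y + \<mu> *s v) $ j) holomorphic_on S"
  unfolding holomorphic_on_def
proof
  fix z assume "z \<in> S"
  obtain L where L: "(g has_derivative L) (at (y + z *s v))" "\<And>c w. L (c *s w) = c *s L w"
    using assms(1) assms(3)[OF \<open>z \<in> S\<close>] unfolding holo_map_on_def by blast
  have "((\<lambda>\<mu>. y + \<mu> *s v) has_derivative (\<lambda>h. h *s v)) (at z)"
    using has_derivative_add[OF has_derivative_const bounded_linear_imp_has_derivative[OF bounded_linear_vector_smult_left]]
    by simp
  from diff_chain_at[OF this L(1)]
  have "((\<lambda>\<mu>. g (y + \<mu> *s v)) has_derivative (\<lambda>h. h *s L v)) (at z)"
    by (simp add: o_def L(2))
  from bounded_linear.has_derivative[OF bounded_linear_vec_nth[of j] this]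
  have "((\<lambda>\<mu>. g (y + \<mu> *s v) $ j) has_derivative (*) (L v $ j)) (at z)"
    by (simp add: mult.commute[of _ "L v $ j"])
  then show "(\<lambda>\<mu>. g (y + \<mu> *s v) $ j) field_differentiable at z within S"
    unfolding field_differentiable_def has_field_derivative_def by (blast intro: has_derivative_at_withinI)
qed

definition cderiv :: "(complex \<Rightarrow> complex ^ 'n) \<Rightarrow> complex \<Rightarrow> complex ^ 'n" where
  "cderiv \<gamma> z = (\<chi> j. deriv (\<lambda>z. \<gamma> z $ j) z)"

lemma holomorphic_on_cderiv:
  "open S \<Longrightarrow> (\<And>j. (\<lambda>z. \<gamma> z $ j) holomorphic_on S) \<Longrightarrow> (\<lambda>z. cderiv \<gamma> z $ j) holomorphic_on S"
  by (simp add: cderiv_def holomorphic_deriv)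

lemma continuous_on_cderiv:
  "open S \<Longrightarrow> (\<And>j. (\<lambda>z. \<gamma> z $ j) holomorphic_on S) \<Longrightarrow> continuous_on S (cderiv \<gamma>)"
  unfolding cderiv_def by (intro continuous_on_vec_lambda holomorphic_on_imp_continuous_on holomorphic_deriv)

lemma has_vector_derivative_cderiv:
  assumes "open S" "\<And>j. (\<lambda>z. \<gamma> z $ j) holomorphic_on S" "z \<in> S"
  shows "((\<lambda>s. \<gamma> (z + of_real s * e)) has_vector_derivative (e *s cderiv \<gamma> z)) (at 0)"
proof (rule has_vector_derivative_vec)
  fix j
  have "((\<lambda>z. \<gamma> z $ j) has_field_derivative deriv (\<lambda>z. \<gamma> z $ j) z) (at z)"
    using holomorphic_derivI[OF assms(2) assms(1,3)] .
  from has_vector_derivative_along_real_line[of _ _ z 0 e, simplified, OF this]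
  show "((\<lambda>s. \<gamma> (z + of_real s * e) $ j) has_vector_derivative (e *s cderiv \<gamma> z) $ j) (at 0)"
    by (simp add: cderiv_def)
qed

context C3_function
begin

lemma has_real_derivative_D_comp:
  fixes \<alpha> \<beta> :: "real \<Rightarrow> complex^2"
  assumes da: "(\<alpha> has_vector_derivative a') (at t)" and db: "(\<beta> has_vector_derivative b') (at t)"
    and S: "open S" "t \<in> S" "\<And>s. s \<in> S \<Longrightarrow> \<alpha> s \<in> U"
  shows "((\<lambda>s. D (\<alpha> s) (\<beta> s)) has_real_derivative (H (\<alpha> t) (\<beta> t) a' + D (\<alpha> t) b')) (at t)"
proof -
  have tU: "\<alpha> t \<in> U" using S by blast
  have dD: "((\<lambda>s. D (\<alpha> s) e) has_real_derivative H (\<alpha> t) e a') (at t)" for e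
  proof -
    have "(((\<lambda>x. D x e) \<circ> \<alpha>) has_vector_derivative H (\<alpha> t) e a') (at t)"
      by (rule vector_derivative_diff_chain_within[OF da], rule has_derivative_at_withinI, rule has_derivative_D[OF tU])
    then show ?thesis by (simp add: has_real_derivative_iff_has_vector_derivative o_def)
  qed
  have dc: "((\<lambda>s. Re (\<beta> s $ j)) has_real_derivative Re (b' $ j)) (at t)"
           "((\<lambda>s. Im (\<beta> s $ j)) has_real_derivative Im (b' $ j)) (at t)" for j
    using bounded_linear.has_vector_derivative[OF bounded_linear_compose[OF bounded_linear_Re bounded_linear_vec_nth] db, of j]
          bounded_linear.has_vector_derivative[OF bounded_linear_compose[OF bounded_linear_Im bounded_linear_vec_nth] db, of j]
    by (simp_all add: has_real_derivative_iff_has_vector_derivative)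
  define E where "E s = Re (\<beta> s $ 1) * D (\<alpha> s) (axis 1 1) + Im (\<beta> s $ 1) * D (\<alpha> s) (axis 1 \<i>)
      + Re (\<beta> s $ 2) * D (\<alpha> s) (axis 2 1) + Im (\<beta> s $ 2) * D (\<alpha> s) (axis 2 \<i>)" for s
  have "(E has_real_derivative
       (Re (b' $ 1) * D (\<alpha> t) (axis 1 1) + H (\<alpha> t) (axis 1 1) a' * Re (\<beta> t $ 1)
      + (Im (b' $ 1) * D (\<alpha> t) (axis 1 \<i>) + H (\<alpha> t) (axis 1 \<i>) a' * Im (\<beta> t $ 1))
      + (Re (b' $ 2) * D (\<alpha> t) (axis 2 1) + H (\<alpha> t) (axis 2 1) a' * Re (\<beta> t $ 2))
      + (Im (b' $ 2) * D (\<alpha> t) (axis 2 \<i>) + H (\<alpha> t) (axis 2 \<i>) a' * Im (\<beta> t $ 2)))) (at t)"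
    unfolding E_def by (intro DERIV_add DERIV_mult dc dD)
  moreover have "Re (b' $ 1) * D (\<alpha> t) (axis 1 1) + H (\<alpha> t) (axis 1 1) a' * Re (\<beta> t $ 1)
      + (Im (b' $ 1) * D (\<alpha> t) (axis 1 \<i>) + H (\<alpha> t) (axis 1 \<i>) a' * Im (\<beta> t $ 1))
      + (Re (b' $ 2) * D (\<alpha> t) (axis 2 1) + H (\<alpha> t) (axis 2 1) a' * Re (\<beta> t $ 2))
      + (Im (b' $ 2) * D (\<alpha> t) (axis 2 \<i>) + H (\<alpha> t) (axis 2 \<i>) a' * Im (\<beta> t $ 2))
      = H (\<alpha> t) (\<beta> t) a' + D (\<alpha> t) b'"
    using linear_expand_complex2[OF linear_D[OF tU], of b'] linear_expand_complex2[OF linear_H_left[OF tU], of "\<beta> t" a']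
    by (simp add: algebra_simps)
  ultimately have "(E has_real_derivative H (\<alpha> t) (\<beta> t) a' + D (\<alpha> t) b') (at t)" by simp
  then show ?thesis
  proof (rule has_field_derivative_transform_within_open[OF _ S(1,2)])
    show "E s = D (\<alpha> s) (\<beta> s)" if "s \<in> S" for s
      using linear_expand_complex2[OF linear_D[OF S(3)[OF that]], of "\<beta> s"] by (simp add: E_def)
  qed
qed

lemma has_real_derivative_rho_holomorphic_line:
  assumes "open S" "\<And>j. (\<lambda>z. \<gamma> z $ j) holomorphic_on S" "\<gamma> ` S \<subseteq> U" "z \<in> S"
  shows "((\<lambda>s. \<rho> (\<gamma> (z + of_real s * e))) has_real_derivative D (\<gamma> z) (e *s cderiv \<gamma> z)) (at 0)"
proof -
  have "((\<rho> \<circ> (\<lambda>s. \<gamma> (z + of_real s * e))) has_vector_derivative D (\<gamma> z) (e *s cderiv \<gamma> z)) (at 0)"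
    by (rule vector_derivative_diff_chain_within[OF has_vector_derivative_cderiv[OF assms(1,2,4)]],
        rule has_derivative_at_withinI) (use assms has_derivative_rho[of "\<gamma> z"] in auto)
  then show ?thesis by (simp add: has_real_derivative_iff_has_vector_derivative o_def)
qed

lemma has_real_derivative_D_holomorphic_line:
  assumes S: "open S" "\<And>j. (\<lambda>z. \<gamma> z $ j) holomorphic_on S" "\<gamma> ` S \<subseteq> U" "z \<in> S"
  shows "((\<lambda>s. D (\<gamma> (z + of_real s * e)) (c *s cderiv \<gamma> (z + of_real s * e))) has_real_derivative
           H (\<gamma> z) (c *s cderiv \<gamma> z) (e *s cderiv \<gamma> z) + D (\<gamma> z) (c *s (e *s cderiv (cderiv \<gamma>) z))) (at 0)"
proof -
  have S': "open ((\<lambda>s. z + of_real s * e) -` S)"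
    by (rule continuous_open_vimage[OF S(1)]) (intro continuous_intros)
  have "((\<lambda>s. D (\<gamma> (z + of_real s * e)) (c *s cderiv \<gamma> (z + of_real s * e))) has_real_derivative
      H (\<gamma> (z + of_real 0 * e)) (c *s cderiv \<gamma> (z + of_real 0 * e)) (e *s cderiv \<gamma> z)
        + D (\<gamma> (z + of_real 0 * e)) (c *s (e *s cderiv (cderiv \<gamma>) z))) (at 0)"
  proof (rule has_real_derivative_D_comp[where S="(\<lambda>s. z + of_real s * e) -` S"])
    show "((\<lambda>s. \<gamma> (z + of_real s * e)) has_vector_derivative e *s cderiv \<gamma> z) (at 0)"
      by (rule has_vector_derivative_cderiv[OF S(1,2,4)])
    show "((\<lambda>s. c *s cderiv \<gamma> (z + of_real s * e)) has_vector_derivative c *s (e *s cderiv (cderiv \<gamma>) z)) (at 0)"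
      by (rule bounded_linear.has_vector_derivative[OF bounded_linear_vector_smult_right
            has_vector_derivative_cderiv[OF S(1) holomorphic_on_cderiv[OF S(1,2)] S(4)]])
  qed (use S S' in auto)
  then show ?thesis by simp
qed

end

lemma le_uniform_bound:
  fixes L x G n B Kf Kg :: real
  assumes "L \<le> Kf * x * n\<^sup>2 + Kg * G * n" "0 \<le> x" "0 \<le> n" "n \<le> B" "0 \<le> G"
  shows "L \<le> (\<bar>Kf\<bar> * B\<^sup>2 + \<bar>Kg\<bar> * B) * x + (\<bar>Kf\<bar> * B\<^sup>2 + \<bar>Kg\<bar> * B) * G"
proof -
  have "Kf * x * n\<^sup>2 \<le> \<bar>Kf\<bar> * x * B\<^sup>2" "Kg * G * n \<le> \<bar>Kg\<bar> * G * B"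
    using assms by (auto intro!: mult_mono power_mono)
  moreover have "0 \<le> \<bar>Kg\<bar> * B * x" "0 \<le> \<bar>Kf\<bar> * B\<^sup>2 * G"
    using assms by simp_all
  ultimately show ?thesis using assms(1) by (simp add: algebra_simps)
qed

context C3_function
begin

text \<open>Along a holomorphic disc, \<open>u = - \<rho> \<circ> \<gamma>\<close> has Laplacian \<open>- levi_quad H (\<gamma> z) (\<gamma>' z)\<close>, so the
  lower bound for the Levi form turns into the differential inequality of the Hopf lemma.\<close>

lemma holomorphic_disc_no_boundary_zero:
  assumes est: "\<And>q w. q \<in> V \<Longrightarrow>
      - levi_quad H q w \<le> Kf * \<bar>\<rho> q\<bar> * (norm1 w)\<^sup>2 + Kg * (\<bar>D q w\<bar> + \<bar>D q (\<i> *s w)\<bar>) * norm1 w"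
    and "V \<subseteq> U"
    and hol: "\<And>j. (\<lambda>z. \<gamma> z $ j) holomorphic_on ball 0 3" and "\<gamma> ` ball 0 3 \<subseteq> V"
    and le0: "\<And>z. cmod z < 2 \<Longrightarrow> \<rho> (\<gamma> z) \<le> 0"
    and lt0: "\<And>z. cmod z < 1 \<Longrightarrow> \<rho> (\<gamma> z) < 0"
  shows "\<rho> (\<gamma> 1) \<noteq> 0"
proof
  assume "\<rho> (\<gamma> 1) = 0"
  have "\<gamma> ` ball 0 3 \<subseteq> U" using assms by blast
  note d1 = has_real_derivative_rho_holomorphic_line[OF open_ball hol this]
  note d2 = has_real_derivative_D_holomorphic_line[OF open_ball hol \<open>\<gamma> ` ball 0 3 \<subseteq> U\<close>]
  define \<gamma>1 \<gamma>2 where "\<gamma>1 = cderiv \<gamma>" and "\<gamma>2 = cderiv (cderiv \<gamma>)"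
  have "continuous_on (cball 0 2) (\<lambda>z. norm1 (\<gamma>1 z))"
    unfolding norm1_def \<gamma>1_def
    by (intro continuous_intros continuous_on_subset[OF continuous_on_cderiv[OF open_ball hol]]) auto
  then obtain B where B: "\<And>z. z \<in> cball 0 2 \<Longrightarrow> norm1 (\<gamma>1 z) \<le> B"
    using compact_continuous_image[OF _ compact_cball] compact_imp_bounded bounded_real
    by (metis abs_le_D1 image_eqI)
  have "B \<ge> 0" using B[of 0] norm1_nonneg[of "\<gamma>1 0"] by simp
  define C where "C = \<bar>Kf\<bar> * B\<^sup>2 + \<bar>Kg\<bar> * B"
  define u where "u z = - \<rho> (\<gamma> z)" for z
  define ux uy where "ux z = - D (\<gamma> z) (\<gamma>1 z)" and "uy z = - D (\<gamma> z) (\<i> *s \<gamma>1 z)" for z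
  define uxx where "uxx z = - (H (\<gamma> z) (\<gamma>1 z) (\<gamma>1 z) + D (\<gamma> z) (\<gamma>2 z))" for z
  define uyy where "uyy z = - (H (\<gamma> z) (\<i> *s \<gamma>1 z) (\<i> *s \<gamma>1 z) + D (\<gamma> z) (\<i> *s (\<i> *s \<gamma>2 z)))" for z
  have ux: "((\<lambda>t. u (z + of_real t)) has_real_derivative ux z) (at 0)" if "cmod z < 3" for z
    using DERIV_minus[OF d1[of z 1]] that by (simp add: u_def ux_def \<gamma>1_def)
  have "ux 1 < 0"
  proof (rule hopf_lemma[where C=C and uy=uy and uxx=uxx and uyy=uyy])
    have "continuous_on (ball 0 3) \<gamma>"
      using continuous_on_vec_lambda[of "ball 0 3" "\<lambda>j z. \<gamma> z $ j"] holomorphic_on_imp_continuous_on[OF hol]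
      by simp
    from continuous_on_compose2[OF continuous_on_rho this \<open>\<gamma> ` ball 0 3 \<subseteq> U\<close>]
    show "continuous_on (cball 0 1) u"
      unfolding u_def by (rule continuous_on_minus[OF continuous_on_subset]) auto
    show "uxx z + uyy z \<le> C * u z + C * (\<bar>ux z\<bar> + \<bar>uy z\<bar>)" if "cmod z < 1" for z
    proof -
      have "z \<in> ball 0 3" using that by simp
      then have "\<gamma> z \<in> V" "\<gamma> z \<in> U" using assms(2,4) by blast+
      have "\<i> *s (\<i> *s w) = - w" for w :: "complex^2"
        by (simp add: vec_eq_iff)
      then have "uxx z + uyy z = - levi_quad H (\<gamma> z) (\<gamma>1 z)"
        using bounded_linear_D[OF \<open>\<gamma> z \<in> U\<close>] by (simp add: uxx_def uyy_def levi_quad_def linear_simps)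
      also have "\<dots> \<le> C * u z + C * (\<bar>ux z\<bar> + \<bar>uy z\<bar>)"
        unfolding C_def
      proof (rule le_uniform_bound[OF _ _ norm1_nonneg B])
        show "- levi_quad H (\<gamma> z) (\<gamma>1 z) \<le> Kf * u z * (norm1 (\<gamma>1 z))\<^sup>2 + Kg * (\<bar>ux z\<bar> + \<bar>uy z\<bar>) * norm1 (\<gamma>1 z)"
          using est[OF \<open>\<gamma> z \<in> V\<close>, of "\<gamma>1 z"] le0[of z] that by (simp add: u_def ux_def uy_def)
      qed (use le0[of z] that in \<open>simp_all add: u_def\<close>)
      finally show ?thesis .
    qed
    show "((\<lambda>t. ux (z + of_real t)) has_real_derivative uxx z) (at 0)" if "cmod z < 1" for z
      using DERIV_minus[OF d2[of z 1 1]] that by (simp add: ux_def uxx_def \<gamma>1_def \<gamma>2_def)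
    show "((\<lambda>t. u (z + of_real t * \<i>)) has_real_derivative uy z) (at 0)" if "cmod z < 1" for z
      using DERIV_minus[OF d1[of z \<i>]] that by (simp add: u_def uy_def \<gamma>1_def)
    show "((\<lambda>t. uy (z + of_real t * \<i>)) has_real_derivative uyy z) (at 0)" if "cmod z < 1" for z
      using DERIV_minus[OF d2[of z \<i> \<i>]] that by (simp add: uy_def uyy_def \<gamma>1_def \<gamma>2_def)
  qed (use \<open>B \<ge> 0\<close> \<open>\<rho> (\<gamma> 1) = 0\<close> le0 lt0 ux d1 d2 in \<open>auto simp: C_def u_def ux_def uy_def uxx_def uyy_def \<gamma>1_def \<gamma>2_def\<close>)
  moreover have "ux 1 = 0"
  proof (rule DERIV_local_min[OF ux[of 1]])
    show "\<forall>y. \<bar>0 - y\<bar> < 1 \<longrightarrow> u (1 + of_real 0) \<le> u (1 + of_real y)"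
    proof (intro allI impI)
      fix y :: real assume "\<bar>0 - y\<bar> < 1"
      then have "cmod (1 + of_real y) < 2"
        using norm_triangle_ineq[of 1 "of_real y :: complex"] by simp
      then show "u (1 + of_real 0) \<le> u (1 + of_real y)"
        using le0 \<open>\<rho> (\<gamma> 1) = 0\<close> by (simp add: u_def)
    qed
  qed simp_all
  ultimately show False by simp
qed

end

lemma nearest_zero:
  fixes \<phi> :: "'a::heine_borel \<Rightarrow> real"
  assumes "continuous_on (cball y r) \<phi>" "z0 \<in> cball y r" "\<phi> z0 = 0" "\<phi> y \<noteq> 0"
  obtains zs where "zs \<in> cball y r" "\<phi> zs = 0" "0 < dist y zs" "dist y zs \<le> dist y z0"
    "\<And>z. dist y z < dist y zs \<Longrightarrow> \<phi> z \<noteq> 0"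
proof -
  have "closed {z \<in> cball y r. \<phi> z = 0}"
    using continuous_closed_preimage_constant[OF assms(1) closed_cball] .
  then obtain zs where zs: "zs \<in> {z \<in> cball y r. \<phi> z = 0}"
    and min: "\<And>z. z \<in> {z \<in> cball y r. \<phi> z = 0} \<Longrightarrow> dist y zs \<le> dist y z"
    using distance_attains_inf[of _ y] assms(2,3) by blast
  show ?thesis
  proof
    show "zs \<in> cball y r" "\<phi> zs = 0" "dist y zs \<le> dist y z0" using zs min[of z0] assms(2,3) by auto
    show "0 < dist y zs" using zs assms(4) by auto
    show "\<phi> z \<noteq> 0" if "dist y z < dist y zs" for z
      using min[of z] that zs by (force simp: dist_commute)
  qed
qed

lemma holo_map_on_imp_continuous_on: "holo_map_on A g \<Longrightarrow> continuous_on A g"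
  unfolding holo_map_on_def by (metis continuous_at_imp_continuous_on has_derivative_continuous)

context C3_function
begin

lemma holo_map_zero_near_contact:
  assumes est: "\<And>q w. q \<in> V \<Longrightarrow>
      - levi_quad H q w \<le> Kf * \<bar>\<rho> q\<bar> * (norm1 w)\<^sup>2 + Kg * (\<bar>D q w\<bar> + \<bar>D q (\<i> *s w)\<bar>) * norm1 w"
    and "V \<subseteq> U" and holo: "holo_map_on Dh g" and ball_Dh: "ball z0 \<delta> \<subseteq> Dh"
    and g_ball: "g ` ball z0 \<delta> \<subseteq> V" and le0: "\<And>z. z \<in> ball z0 \<delta> \<Longrightarrow> \<rho> (g z) \<le> 0"
    and "\<rho> (g z0) = 0" and cont: "continuous_on (ball z0 \<delta>) (\<lambda>z. \<rho> (g z))"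
    and y: "y \<in> ball z0 (\<delta> / 4)"
  shows "\<rho> (g y) = 0"
proof (rule ccontr)
  assume "\<rho> (g y) \<noteq> 0"
  have "dist z0 y < \<delta> / 4" using y by simp
  then have "\<delta> > 0" using zero_le_dist[of z0 y] by linarith
  have cball_y: "cball y (\<delta> / 4) \<subseteq> ball z0 \<delta>"
  proof
    fix z assume "z \<in> cball y (\<delta> / 4)"
    then have "dist y z \<le> \<delta> / 4" by simp
    moreover have "dist z0 y < \<delta> / 4" using y by simp
    ultimately show "z \<in> ball z0 \<delta>" using dist_triangle[of z0 z y] \<open>\<delta> > 0\<close> by simp
  qed
  obtain zs where zs: "\<rho> (g zs) = 0" "0 < dist y zs" "dist y zs \<le> dist y z0"
    and neg: "\<And>z. dist y z < dist y zs \<Longrightarrow> \<rho> (g z) \<noteq> 0"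
  proof (rule nearest_zero[where \<phi>="\<lambda>z. \<rho> (g z)"])
    show "continuous_on (cball y (\<delta> / 4)) (\<lambda>z. \<rho> (g z))"
      using cont cball_y continuous_on_subset by blast
    show "z0 \<in> cball y (\<delta> / 4)" using y by (simp add: dist_commute)
  qed (use \<open>\<rho> (g z0) = 0\<close> \<open>\<rho> (g y) \<noteq> 0\<close> in auto)
  define v where "v = zs - y"
  have line: "y + z *s v \<in> ball z0 \<delta>" if "cmod z < 3" for z
  proof -
    have "dist z0 (y + z *s v) \<le> dist z0 y + norm (z *s v)"
      using norm_triangle_ineq4[of "z0 - y" "z *s v"] by (simp add: dist_norm algebra_simps)
    moreover have "norm (z *s v) = cmod z * dist y zs"
      unfolding v_def norm_vector_smult_complex by (simp add: dist_norm norm_minus_commute)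
    moreover have "dist y zs < \<delta> / 4" using y zs(3) by (simp add: dist_commute)
    then have "cmod z * dist y zs < 3 * (\<delta> / 4)"
      using that zs(2) by (intro mult_strict_mono) auto
    moreover have "dist z0 y < \<delta> / 4" using y by simp
    ultimately have "dist z0 (y + z *s v) < \<delta>" by linarith
    then show ?thesis by simp
  qed
  have "\<rho> (g (y + 1 *s v)) \<noteq> 0"
  proof (rule holomorphic_disc_no_boundary_zero[OF est \<open>V \<subseteq> U\<close>])
    show "(\<lambda>z. g (y + z *s v) $ j) holomorphic_on ball 0 3" for j
      using line ball_Dh by (intro holo_map_on_line_holomorphic[OF holo]) auto
    show "(\<lambda>z. g (y + z *s v)) ` ball 0 3 \<subseteq> V" using line g_ball by auto
    show "\<rho> (g (y + z *s v)) \<le> 0" if "cmod z < 2" for z using line[of z] le0 that by auto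
    show "\<rho> (g (y + z *s v)) < 0" if "cmod z < 1" for z
    proof -
      have "dist y (y + z *s v) = norm (z *s v)" by (simp add: dist_norm)
      also have "\<dots> = cmod z * dist y zs"
        unfolding v_def norm_vector_smult_complex by (simp add: dist_norm norm_minus_commute)
      finally have "dist y (y + z *s v) < dist y zs" using that zs(2) by simp
      then show ?thesis using neg line[of z] le0 that by fastforce
    qed
  qed
  then show False using zs(1) by (simp add: v_def)
qed

lemma levi_flat_zero_set_open:
  assumes LF: "levi_flat U \<rho>" and "open Dh" and holo: "holo_map_on Dh g"
    and gU: "g ` Dh \<subseteq> U" and le0: "\<And>z. z \<in> Dh \<Longrightarrow> \<rho> (g z) \<le> 0"
    and nz: "\<And>p. p \<in> U \<Longrightarrow> \<rho> p = 0 \<Longrightarrow> \<exists>v. D p v \<noteq> 0"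
    and z0: "z0 \<in> Dh" "\<rho> (g z0) = 0"
  obtains \<delta> where "\<delta> > 0" "ball z0 \<delta> \<subseteq> Dh" "\<And>z. z \<in> ball z0 \<delta> \<Longrightarrow> \<rho> (g z) = 0"
proof -
  define p where "p = g z0"
  have "p \<in> U" "\<rho> p = 0" using gU z0 by (auto simp: p_def)
  then obtain r Kf Kg where "r > 0" "ball p r \<subseteq> U" and est: "\<And>q w. q \<in> ball p r \<Longrightarrow>
      - levi_quad H q w \<le> Kf * \<bar>\<rho> q\<bar> * (norm1 w)\<^sup>2 + Kg * (\<bar>D q w\<bar> + \<bar>D q (\<i> *s w)\<bar>) * norm1 w"
    using neg_levi_quad_le[OF LF] nz by metis
  have "continuous_on Dh g" using holo by (rule holo_map_on_imp_continuous_on)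
  then have "continuous_on Dh (\<lambda>z. \<rho> (g z))"
    using continuous_on_compose2[OF continuous_on_rho _ gU] by blast
  have "isCont g z0" using \<open>continuous_on Dh g\<close> \<open>open Dh\<close> z0(1) continuous_on_eq_continuous_at by blast
  then obtain \<delta>1 where "\<delta>1 > 0" and \<delta>1: "\<And>z. dist z z0 < \<delta>1 \<Longrightarrow> dist (g z) p < r"
    unfolding continuous_at_eps_delta p_def using \<open>r > 0\<close> by blast
  obtain \<delta>2 where "\<delta>2 > 0" "ball z0 \<delta>2 \<subseteq> Dh" using \<open>open Dh\<close> z0(1) open_contains_ball by blast
  define \<delta> where "\<delta> = min \<delta>1 \<delta>2"
  have "\<delta> > 0" using \<open>\<delta>1 > 0\<close> \<open>\<delta>2 > 0\<close> by (simp add: \<delta>_def)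
  have ball_Dh: "ball z0 \<delta> \<subseteq> Dh" using \<open>ball z0 \<delta>2 \<subseteq> Dh\<close> by (auto simp: \<delta>_def)
  have "g ` ball z0 \<delta> \<subseteq> ball p r"
    using \<delta>1 by (auto simp: \<delta>_def dist_commute)
  moreover have "continuous_on (ball z0 \<delta>) (\<lambda>z. \<rho> (g z))"
    using \<open>continuous_on Dh (\<lambda>z. \<rho> (g z))\<close> ball_Dh continuous_on_subset by blast
  ultimately have zero: "\<rho> (g y) = 0" if "y \<in> ball z0 (\<delta> / 4)" for y
    using holo_map_zero_near_contact[OF est \<open>ball p r \<subseteq> U\<close> holo ball_Dh _ _ z0(2) _ that] ball_Dh le0
    by blast
  show ?thesis
  proof (rule that[of "\<delta> / 4"])
    show "ball z0 (\<delta> / 4) \<subseteq> Dh" using subset_ball[of "\<delta> / 4" \<delta> z0] ball_Dh \<open>\<delta> > 0\<close> by auto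
  qed (use \<open>\<delta> > 0\<close> zero in auto)
qed

end

context C3_function
begin

lemma levi_flat_contact_spreads:
  assumes "levi_flat U \<rho>" "open Dh" "connected Dh" "holo_map_on Dh g" "g ` Dh \<subseteq> U"
    and "\<And>z. z \<in> Dh \<Longrightarrow> \<rho> (g z) \<le> 0" "\<And>p. p \<in> U \<Longrightarrow> \<rho> p = 0 \<Longrightarrow> \<exists>v. D p v \<noteq> 0"
    and "z0 \<in> Dh" "\<rho> (g z0) = 0"
  shows "\<And>z. z \<in> Dh \<Longrightarrow> \<rho> (g z) = 0"
proof -
  define Z where "Z = {z \<in> Dh. \<rho> (g z) = 0}"
  have "continuous_on Dh (\<lambda>z. \<rho> (g z))"
    using continuous_on_compose2[OF continuous_on_rho holo_map_on_imp_continuous_on[OF assms(4)] assms(5)] .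
  then have "closedin (top_of_set Dh) Z"
    unfolding Z_def by (rule continuous_closedin_preimage_constant)
  moreover have "openin (top_of_set Dh) Z"
  proof (rule open_subset)
    show "open Z"
      unfolding open_contains_ball
    proof
      fix z assume "z \<in> Z"
      then obtain \<delta> where "\<delta> > 0" "ball z \<delta> \<subseteq> Dh" "\<And>w. w \<in> ball z \<delta> \<Longrightarrow> \<rho> (g w) = 0"
        using levi_flat_zero_set_open[OF assms(1,2,4-7)] unfolding Z_def by blast
      then show "\<exists>\<delta>>0. ball z \<delta> \<subseteq> Z" by (auto simp: Z_def)
    qed
  qed (auto simp: Z_def)
  moreover have "Z \<noteq> {}" using assms(8,9) by (auto simp: Z_def)
  ultimately have "Z = Dh" using assms(3) unfolding connected_clopen by blast
  then show "\<And>z. z \<in> Dh \<Longrightarrow> \<rho> (g z) = 0" by (auto simp: Z_def)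
qed

end

lemma smooth_on_imp_continuous_on: "smooth_on U f \<Longrightarrow> continuous_on U f"
  unfolding smooth_on_def using Ck_on.simps(1) by blast

lemma pw_smooth_levi_flat_nonpos_on_closure:
  assumes "pw_smooth_levi_flat D U m \<rho>" "k < m" "x \<in> closure D"
  shows "\<rho> k x \<le> 0"
proof (rule continuous_le_on_closure[OF _ assms(3)])
  have "closure D \<subseteq> U" "smooth_on U (\<rho> k)"
    using assms(1,2) unfolding pw_smooth_levi_flat_def by auto
  then show "continuous_on (closure D) (\<rho> k)"
    using smooth_on_imp_continuous_on continuous_on_subset by blast
  show "\<rho> k y \<le> 0" if "y \<in> D" for y
    using assms(1,2) that unfolding pw_smooth_levi_flat_def by (auto intro: less_imp_le)
qed

lemma pw_smooth_levi_flat_derivative_nonzero: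
  assumes "pw_smooth_levi_flat D U m \<rho>" "k < m" "q \<in> U" "\<rho> k q = 0"
  shows "\<exists>v. frechet_derivative (\<rho> k) (at q) v \<noteq> 0"
proof -
  have "\<forall>K q. K \<subseteq> {..<m} \<and> q \<in> U \<and> (\<forall>k\<in>K. \<rho> k q = 0) \<longrightarrow>
        (\<forall>c::nat\<Rightarrow>real. (\<forall>v. (\<Sum>k\<in>K. c k * frechet_derivative (\<rho> k) (at q) v) = 0)
             \<longrightarrow> (\<forall>k\<in>K. c k = 0))"
    using assms(1) unfolding pw_smooth_levi_flat_def by (elim conjE)
  from this[rule_format, of "{k}" q "\<lambda>_. 1"] show ?thesis
    using assms(2-4) by auto
qed

theorem lemma3p2:
  fixes D U Dh :: "(complex^2) set" and m k0 :: nat and \<rho> :: "nat \<Rightarrow> complex^2 \<Rightarrow> real"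
    and g :: "complex^2 \<Rightarrow> complex^2"
  assumes "bounded D" "open D" "connected D"
    and "pw_smooth_levi_flat D U m \<rho>"
    and "k0 < m"
    and "open Dh" "connected Dh" "Dh \<subseteq> D"
    and "holo_map_on Dh g"
    and "g ` Dh \<subseteq> frontier D"
    and "g ` Dh \<inter> {q\<in>U. \<rho> k0 q = 0} \<noteq> {}"
  shows "g ` Dh \<subseteq> {q\<in>U. \<rho> k0 q = 0}"
proof -
  have U: "open U" "closure D \<subseteq> U" "smooth_on U (\<rho> k0)" "levi_flat U (\<rho> k0)"
    using assms(4,5) unfolding pw_smooth_levi_flat_def by auto
  then obtain D\<rho> H\<rho> where "C3_function U (\<rho> k0) D\<rho> H\<rho>"
    using smooth_on_imp_C3_function by blast
  then interpret C3_function U "\<rho> k0" D\<rho> H\<rho> .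
  have g_closure: "g ` Dh \<subseteq> closure D" using assms(10) by (auto simp: frontier_def)
  obtain z0 where z0: "z0 \<in> Dh" "\<rho> k0 (g z0) = 0" using assms(11) by blast
  have "\<rho> k0 (g z) = 0" if "z \<in> Dh" for z
  proof (rule levi_flat_contact_spreads[OF U(4) assms(6,7,9) _ _ _ z0 that])
    show "g ` Dh \<subseteq> U" using g_closure U(2) by blast
    show "\<rho> k0 (g z) \<le> 0" if "z \<in> Dh" for z
      using pw_smooth_levi_flat_nonpos_on_closure[OF assms(4,5)] g_closure that by blast
    show "\<exists>v. D\<rho> p v \<noteq> 0" if "p \<in> U" "\<rho> k0 p = 0" for p
      using pw_smooth_levi_flat_derivative_nonzero[OF assms(4,5) that]
        frechet_derivative_at[OF has_derivative_rho[OF that(1)]] by simp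
  qed
  then show ?thesis using g_closure U(2) by auto
qed

end
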